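(* Let $H$ be a connected false-twin-free graph with $|V(H)|\ge 7$, let $G=KB(H)$, let $q$ be a vertex of $G$ with $d_G(q)=2$, and let $B$ be the biclique of $H$ corresponding to $q$. Then one of the following holds: (1) $B$ induces $K_{1,1}$, say $B=\{v,w\}$ with $vw\in E(H)$, and there is a vertex $x$ with $N[v]=N[w]=\{v,w,x\}$ and such that $N(x)\setminus\{v,w\}$ is an independent set of $H$; (2) $B$ induces $K_{1,2}$, say with center $b$ and leaves $a,c$ (so $ab,bc\in E(H)$, $ac\notin E(H)$), and, after possibly exchanging the names of $a$ and $c$, $N(a)=\{b\}$ and $N(b)=\{a,c\}$.
   Context: All graphs are finite, simple, undirected and connected. A biclique of a graph $H$ is a maximal (with respect to vertex-set inclusion) set of vertices inducing a complete bipartite subgraph $K_{r,s}$ with $r,s\ge 1$. The biclique graph $KB(H)$ is the intersection graph of the family of all bicliques of $H$: its vertices are the bicliques of $H$, and two bicliques are adjacent iff they share at least one vertex. $N(u)$ denotes the open neighborhood of $u$ and $N[u]=N(u)\cup\{u\}$ the closed neighborhood. Two distinct vertices $u,v$ are false-twins if $N(u)=N(v)$; a graph is false-twin-free if it has no pair of false-twins. *)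

theory Defs
  imports Main
begin

definition simple_graph :: "'a set \<Rightarrow> ('a \<Rightarrow> 'a \<Rightarrow> bool) \<Rightarrow> bool" where
  "simple_graph V E \<longleftrightarrow> finite V \<and> V \<noteq> {} \<and>
     (\<forall>u v. E u v \<longrightarrow> u \<in> V \<and> v \<in> V) \<and>
     (\<forall>u v. E u v \<longrightarrow> E v u) \<and> (\<forall>u. \<not> E u u)"

definition connected_graph :: "'a set \<Rightarrow> ('a \<Rightarrow> 'a \<Rightarrow> bool) \<Rightarrow> bool" where
  "connected_graph V E \<longleftrightarrow> (\<forall>u\<in>V. \<forall>v\<in>V. E\<^sup>*\<^sup>* u v)"

definition nbhd :: "'a set \<Rightarrow> ('a \<Rightarrow> 'a \<Rightarrow> bool) \<Rightarrow> 'a \<Rightarrow> 'a set" where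
  "nbhd V E u = {w \<in> V. E u w}"

definition closed_nbhd :: "'a set \<Rightarrow> ('a \<Rightarrow> 'a \<Rightarrow> bool) \<Rightarrow> 'a \<Rightarrow> 'a set" where
  "closed_nbhd V E u = insert u (nbhd V E u)"

definition false_twin_free :: "'a set \<Rightarrow> ('a \<Rightarrow> 'a \<Rightarrow> bool) \<Rightarrow> bool" where
  "false_twin_free V E \<longleftrightarrow> (\<forall>u\<in>V. \<forall>v\<in>V. u \<noteq> v \<longrightarrow> nbhd V E u \<noteq> nbhd V E v)"

definition independent_set :: "('a \<Rightarrow> 'a \<Rightarrow> bool) \<Rightarrow> 'a set \<Rightarrow> bool" where
  "independent_set E S \<longleftrightarrow> (\<forall>x\<in>S. \<forall>y\<in>S. \<not> E x y)"

definition induces_complete_bipartite :: "('a \<Rightarrow> 'a \<Rightarrow> bool) \<Rightarrow> 'a set \<Rightarrow> bool" where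
  "induces_complete_bipartite E S \<longleftrightarrow>
     (\<exists>X Y. X \<noteq> {} \<and> Y \<noteq> {} \<and> X \<inter> Y = {} \<and> S = X \<union> Y \<and>
        independent_set E X \<and> independent_set E Y \<and> (\<forall>x\<in>X. \<forall>y\<in>Y. E x y))"

definition biclique :: "'a set \<Rightarrow> ('a \<Rightarrow> 'a \<Rightarrow> bool) \<Rightarrow> 'a set \<Rightarrow> bool" where
  "biclique V E B \<longleftrightarrow> B \<subseteq> V \<and> induces_complete_bipartite E B \<and>
     (\<forall>B'. B \<subseteq> B' \<and> B' \<subseteq> V \<and> induces_complete_bipartite E B' \<longrightarrow> B' = B)"

definition KB_vertices :: "'a set \<Rightarrow> ('a \<Rightarrow> 'a \<Rightarrow> bool) \<Rightarrow> 'a set set" where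
  "KB_vertices V E = {B. biclique V E B}"

definition KB_adj :: "'a set \<Rightarrow> ('a \<Rightarrow> 'a \<Rightarrow> bool) \<Rightarrow> 'a set \<Rightarrow> 'a set \<Rightarrow> bool" where
  "KB_adj V E B1 B2 \<longleftrightarrow> B1 \<in> KB_vertices V E \<and> B2 \<in> KB_vertices V E \<and>
     B1 \<noteq> B2 \<and> B1 \<inter> B2 \<noteq> {}"

definition KB_degree :: "'a set \<Rightarrow> ('a \<Rightarrow> 'a \<Rightarrow> bool) \<Rightarrow> 'a set \<Rightarrow> nat" where
  "KB_degree V E B = card {B'. KB_adj V E B B'}"

end

theory Submission
  imports Defs
begin

(* Write B = X \<union> Y and let B1, B2 be the two other bicliques meeting B. Every complete bipartite
   set that meets B and leaves it lies in B1 or in B2. Since there are no false twins, the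
   vertices of each part of B (and, in the harder cases, the vertices outside B) are therefore
   determined by their memberships in B1 and B2, and connectivity makes every vertex adjacent
   to B. If both parts have two or more vertices, or if X = {b} and b has a neighbour outside
   B, this leaves room for at most six vertices. Otherwise either X = {v} and Y = {w}, which
   gives the triangle configuration, or X = {b} with N(b) = Y, where exactly one vertex of Y is
   a pendant vertex at b, which gives the path configuration. *)

lemma card_le_3_if_inj_avoids:
  fixes f :: "'a \<Rightarrow> bool \<times> bool"
  assumes "inj_on f A" "t \<notin> f ` A"
  shows "card A \<le> 3"
proof -
  have "card (UNIV :: (bool \<times> bool) set) = 4"
    by (simp add: UNIV_Times_UNIV[symmetric] card_cartesian_product del: UNIV_Times_UNIV)
  then have "card (UNIV - {t}) = 3"
    by (simp add: card_Diff_singleton)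
  moreover have "card A \<le> card (UNIV - {t})"
    using assms(2) by (intro card_inj_on_le[OF assms(1)]) auto
  ultimately show ?thesis
    by simp
qed

lemma card_le_2_if_inj_into_pair:
  assumes "inj_on f A" "f ` A \<subseteq> {s, t}"
  shows "card A \<le> 2"
proof -
  have "card A \<le> card {s, t}"
    using card_inj_on_le[OF assms] by simp
  also have "\<dots> \<le> 2"
    by (simp add: card_insert_if)
  finally show ?thesis .
qed

definition membership :: "'a set \<Rightarrow> 'a set \<Rightarrow> 'a \<Rightarrow> bool \<times> bool" where
  "membership C1 C2 z = (z \<in> C1, z \<in> C2)"

locale ugraph =
  fixes V :: "'a set" and E :: "'a \<Rightarrow> 'a \<Rightarrow> bool"
  assumes simple: "simple_graph V E"
begin

lemma adj_sym: "E u v \<Longrightarrow> E v u"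
  using simple unfolding simple_graph_def by blast

lemma adj_irrefl: "\<not> E u u"
  using simple unfolding simple_graph_def by blast

lemma adj_memV1: "E u v \<Longrightarrow> u \<in> V"
  using simple unfolding simple_graph_def by blast

lemma adj_memV2: "E u v \<Longrightarrow> v \<in> V"
  using simple unfolding simple_graph_def by blast

lemma finite_V: "finite V"
  using simple unfolding simple_graph_def by blast

abbreviation cbip :: "'a set \<Rightarrow> bool" where
  "cbip S \<equiv> induces_complete_bipartite E S"

lemma cbip_adj_iff:
  assumes "cbip C" "a \<in> C" "b \<in> C" "c \<in> C" "E a b"
  shows "E a c \<longleftrightarrow> \<not> E b c"
proof -
  obtain X Y where C: "C = X \<union> Y" "X \<inter> Y = {}"
    and indep: "independent_set E X" "independent_set E Y"
    and complete: "\<forall>x\<in>X. \<forall>y\<in>Y. E x y"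
    using assms(1) unfolding induces_complete_bipartite_def by blast
  have across: "E x y" "E y x" if "x \<in> X" "y \<in> Y" for x y
    using that complete adj_sym by blast+
  have within: "\<not> E z z'" if "z \<in> X \<and> z' \<in> X \<or> z \<in> Y \<and> z' \<in> Y" for z z'
    using that indep unfolding independent_set_def by blast
  have "a \<in> X \<and> b \<in> Y \<or> a \<in> Y \<and> b \<in> X"
    using assms(2,3,5) C(1) within by blast
  moreover have "c \<in> X \<or> c \<in> Y"
    using assms(4) C(1) by blast
  ultimately show ?thesis
    using C(2) across within by blast
qed

lemma cbip_has_neighbour:
  assumes "cbip C" "a \<in> C"
  shows "\<exists>b\<in>C. E a b"
  using assms adj_sym unfolding induces_complete_bipartite_def by blast

lemma cbipI:
  assumes "X \<noteq> {}" "Y \<noteq> {}" "independent_set E X" "independent_set E Y"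
    "\<forall>x\<in>X. \<forall>y\<in>Y. E x y"
  shows "cbip (X \<union> Y)"
proof -
  have "X \<inter> Y = {}"
    using assms(5) adj_irrefl by blast
  then show ?thesis
    using assms unfolding induces_complete_bipartite_def by blast
qed

lemma cbip_star:
  assumes "E c p" "E c q" "\<not> E p q"
  shows "cbip {c, p, q}"
proof -
  have "cbip ({c} \<union> {p, q})"
    using assms adj_sym adj_irrefl by (intro cbipI) (auto simp: independent_set_def)
  then show ?thesis
    by (simp add: insert_commute)
qed

lemma cbip_edge: "E a b \<Longrightarrow> cbip {a, b}"
  using cbip_star[of a b b] adj_irrefl by simp

lemma biclique_cbip: "biclique V E C \<Longrightarrow> cbip C"
  unfolding biclique_def by blast

lemma biclique_subset_V: "biclique V E C \<Longrightarrow> C \<subseteq> V"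
  unfolding biclique_def by blast

lemma biclique_maximal: "biclique V E C \<Longrightarrow> C \<subseteq> S \<Longrightarrow> S \<subseteq> V \<Longrightarrow> cbip S \<Longrightarrow> S = C"
  unfolding biclique_def by blast

lemma exists_biclique_superset:
  assumes "cbip S" "S \<subseteq> V"
  shows "\<exists>C. biclique V E C \<and> S \<subseteq> C"
proof -
  define F where "F = {T. S \<subseteq> T \<and> T \<subseteq> V \<and> cbip T}"
  have "F \<subseteq> Pow V"
    unfolding F_def by blast
  then have "finite F"
    using finite_V by (simp add: finite_subset)
  moreover have "S \<in> F"
    using assms unfolding F_def by blast
  ultimately obtain T where T: "T \<in> F" "S \<subseteq> T" and max: "\<forall>T'\<in>F. T \<subseteq> T' \<longrightarrow> T = T'"
    using finite_has_maximal2[of F S] by blast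
  have "biclique V E T"
    unfolding biclique_def
  proof (intro conjI allI impI)
    show "T \<subseteq> V" "cbip T"
      using T(1) unfolding F_def by blast+
  next
    fix T'
    assume T': "T \<subseteq> T' \<and> T' \<subseteq> V \<and> cbip T'"
    then have "T' \<in> F"
      using T(2) unfolding F_def by blast
    then show "T' = T"
      using max T' by metis
  qed
  then show ?thesis
    using T(2) by blast
qed

end

locale twin_free_ugraph = ugraph +
  assumes connected: "connected_graph V E"
    and twin_free: "false_twin_free V E"
begin

lemma eq_if_same_adj:
  assumes "u \<in> V" "v \<in> V" "\<And>w. E u w \<longleftrightarrow> E v w"
  shows "u = v"
proof -
  have "nbhd V E u = nbhd V E v"
    unfolding nbhd_def using assms(3) by auto
  then show ?thesis
    using twin_free assms(1,2) unfolding false_twin_free_def by blast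
qed

lemma V_subset_if_adj_closed:
  assumes "k \<in> K" "k \<in> V" "\<And>k w. k \<in> K \<Longrightarrow> E k w \<Longrightarrow> w \<in> K"
  shows "V \<subseteq> K"
proof
  fix v
  assume "v \<in> V"
  then have "E\<^sup>*\<^sup>* k v"
    using connected assms(2) unfolding connected_graph_def by blast
  then show "v \<in> K"
  proof induction
    case base
    show ?case using assms(1) .
  next
    case (step w w')
    then show ?case using assms(3) by blast
  qed
qed

lemma card_V_le_if_adj_closed:
  assumes "k \<in> K" "k \<in> V" "\<And>k w. k \<in> K \<Longrightarrow> E k w \<Longrightarrow> w \<in> K" "finite K"
  shows "card V \<le> card K"
  using card_mono[OF assms(4) V_subset_if_adj_closed[OF assms(1-3)]] .

lemma exists_edge_leaving:
  assumes "s \<in> S" "S \<subseteq> V" "card S < card V"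
  shows "\<exists>z\<in>S. \<exists>u. u \<notin> S \<and> E z u"
proof (rule ccontr)
  assume "\<not> ?thesis"
  then have "card V \<le> card S"
    using assms(1,2) finite_V by (intro card_V_le_if_adj_closed) (auto intro: finite_subset)
  then show False
    using assms(3) by simp
qed

end

definition (in ugraph) triangle_biclique :: "'a set \<Rightarrow> bool" where
  "triangle_biclique B \<longleftrightarrow>
     (\<exists>v w x. B = {v, w} \<and> v \<noteq> w \<and> E v w \<and> x \<in> V \<and> x \<noteq> v \<and> x \<noteq> w \<and>
        closed_nbhd V E v = {v, w, x} \<and> closed_nbhd V E w = {v, w, x} \<and>
        independent_set E (nbhd V E x - {v, w}))"

definition (in ugraph) pendant_path_biclique :: "'a set \<Rightarrow> bool" where
  "pendant_path_biclique B \<longleftrightarrow>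
     (\<exists>a b c. B = {a, b, c} \<and> a \<noteq> b \<and> b \<noteq> c \<and> a \<noteq> c \<and>
        E a b \<and> E b c \<and> \<not> E a c \<and> nbhd V E a = {b} \<and> nbhd V E b = {a, c})"

text \<open>B1 and B2 are the two neighbours of B in the biclique graph.\<close>

locale degree_two_biclique = twin_free_ugraph +
  fixes B X Y B1 B2 :: "'a set"
  assumes card_V: "card V \<ge> 7"
    and biclique_B: "biclique V E B"
    and B_sides: "B = X \<union> Y"
    and X_nonempty: "X \<noteq> {}" and Y_nonempty: "Y \<noteq> {}"
    and sides_disjoint: "X \<inter> Y = {}"
    and X_indep: "independent_set E X" and Y_indep: "independent_set E Y"
    and X_Y_complete: "\<forall>x\<in>X. \<forall>y\<in>Y. E x y"
    and biclique_B1: "biclique V E B1" and biclique_B2: "biclique V E B2"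
    and B1_neq_B2: "B1 \<noteq> B2" and B1_neq_B: "B1 \<noteq> B" and B2_neq_B: "B2 \<noteq> B"
    and B1_meets_B: "B1 \<inter> B \<noteq> {}" and B2_meets_B: "B2 \<inter> B \<noteq> {}"
    and only_B1_B2: "\<And>C. biclique V E C \<Longrightarrow> C \<inter> B \<noteq> {} \<Longrightarrow> C = B \<or> C = B1 \<or> C = B2"
begin

lemma swap_sides: "degree_two_biclique V E B Y X B1 B2"
proof -
  have "degree_two_biclique_axioms V E B Y X B1 B2"
    unfolding degree_two_biclique_axioms_def
  proof (intro conjI)
    show "B = Y \<union> X" "Y \<inter> X = {}" "\<forall>y\<in>Y. \<forall>x\<in>X. E y x"
      using B_sides sides_disjoint X_Y_complete adj_sym by blast+
  qed (use card_V biclique_B X_nonempty Y_nonempty X_indep Y_indep biclique_B1 biclique_B2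
      B1_neq_B2 B1_neq_B B2_neq_B B1_meets_B B2_meets_B only_B1_B2 in auto)
  then show ?thesis
    by (intro degree_two_biclique.intro twin_free_ugraph_axioms)
qed

lemma others_eq:
  assumes "biclique V E C1" "biclique V E C2" "C1 \<inter> B \<noteq> {}" "C2 \<inter> B \<noteq> {}"
    "C1 \<noteq> B" "C2 \<noteq> B" "C1 \<noteq> C2"
  shows "{C1, C2} = {B1, B2}"
  using only_B1_B2[OF assms(1,3)] only_B1_B2[OF assms(2,4)] assms(5-7) B1_neq_B2 by blast

text \<open>Any two bicliques other than B that meet B are B1 and B2 in some order, so the case
  analyses below may rename B1 and B2 to bicliques they construct themselves.\<close>

lemma reindex_others:
  assumes "biclique V E C1" "biclique V E C2" "C1 \<inter> B \<noteq> {}" "C2 \<inter> B \<noteq> {}"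
    "C1 \<noteq> B" "C2 \<noteq> B" "C1 \<noteq> C2"
  shows "degree_two_biclique V E B X Y C1 C2"
proof -
  have C12: "{C1, C2} = {B1, B2}"
    using others_eq[OF assms] .
  have "degree_two_biclique_axioms V E B X Y C1 C2"
    unfolding degree_two_biclique_axioms_def
  proof (intro conjI allI impI)
    fix C
    assume "biclique V E C" "C \<inter> B \<noteq> {}"
    then show "C = B \<or> C = C1 \<or> C = C2"
      using only_B1_B2 C12 by blast
  qed (use assms card_V biclique_B B_sides X_nonempty Y_nonempty sides_disjoint X_indep Y_indep
      X_Y_complete in auto)
  then show ?thesis
    by (intro degree_two_biclique.intro twin_free_ugraph_axioms)
qed

lemma cbip_B1: "cbip B1" and cbip_B2: "cbip B2"
  using biclique_cbip biclique_B1 biclique_B2 by blast+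

lemma B_subset_V: "B \<subseteq> V"
  using biclique_subset_V biclique_B .

lemma B1_not_subset_B: "\<not> B1 \<subseteq> B"
  using biclique_maximal[OF biclique_B1 _ B_subset_V biclique_cbip[OF biclique_B]] B1_neq_B
  by blast

lemma X_subset_V: "X \<subseteq> V"
  using B_subset_V B_sides by blast

lemma Y_subset_V: "Y \<subseteq> V"
  using B_subset_V B_sides by blast

lemma X_nonadj: "x \<in> X \<Longrightarrow> x' \<in> X \<Longrightarrow> \<not> E x x'"
  using X_indep unfolding independent_set_def by blast

lemma Y_nonadj: "y \<in> Y \<Longrightarrow> y' \<in> Y \<Longrightarrow> \<not> E y y'"
  using Y_indep unfolding independent_set_def by blast

lemma X_Y_adj: "x \<in> X \<Longrightarrow> y \<in> Y \<Longrightarrow> E x y"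
  using X_Y_complete by blast

lemma Y_X_adj: "x \<in> X \<Longrightarrow> y \<in> Y \<Longrightarrow> E y x"
  using X_Y_complete adj_sym by blast

lemma cbip_superset_B_eq: "cbip S \<Longrightarrow> B \<subseteq> S \<Longrightarrow> S \<subseteq> V \<Longrightarrow> S = B"
  using biclique_maximal[OF biclique_B] by blast

lemma B_not_subset_B2: "\<not> B \<subseteq> B2"
  using cbip_superset_B_eq[OF cbip_B2 _ biclique_subset_V[OF biclique_B2]] B2_neq_B by blast

lemma cbip_insert_outside_Y:
  assumes "x \<in> X" "E x w" "w \<notin> B" "\<forall>y\<in>Y. \<not> E w y"
  shows "cbip ({x} \<union> insert w Y)"
proof -
  have "independent_set E (insert w Y)"
    using Y_indep assms(4) adj_sym adj_irrefl unfolding independent_set_def by blast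
  then show ?thesis
    using adj_irrefl X_Y_adj assms(1,2) by (intro cbipI) (auto simp: independent_set_def)
qed

lemma X_has_escape:
  assumes "x1 \<in> X" "x2 \<in> X" "x1 \<noteq> x2"
  shows "\<exists>x\<in>X. \<exists>u. u \<notin> B \<and> E x u"
proof (rule ccontr)
  assume none: "\<not> ?thesis"
  have "x1 = x2"
  proof (rule eq_if_same_adj)
    show "x1 \<in> V" "x2 \<in> V"
      using assms X_subset_V by blast+
    show "E x1 w \<longleftrightarrow> E x2 w" for w
      using X_nonadj X_Y_adj none assms(1,2) B_sides by blast
  qed
  then show False
    using assms(3) by blast
qed

lemma outside_adj_Y_imp_adj_X:
  assumes "u \<in> V" "u \<notin> B" "\<forall>y\<in>Y. E u y"
  shows "\<exists>x\<in>X. E u x"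
proof (rule ccontr)
  assume "\<not> (\<exists>x\<in>X. E u x)"
  then have "cbip (insert u X \<union> Y)"
    using X_indep Y_indep Y_nonempty assms(3) X_Y_complete adj_sym adj_irrefl
    by (intro cbipI) (auto simp: independent_set_def)
  then have "insert u X \<union> Y = B"
    using B_sides X_subset_V Y_subset_V assms(1) by (intro cbip_superset_B_eq) auto
  then show False
    using assms(2) by blast
qed

lemma outside_adj_X_imp_adj_Y:
  "u \<in> V \<Longrightarrow> u \<notin> B \<Longrightarrow> \<forall>x\<in>X. E u x \<Longrightarrow> \<exists>y\<in>Y. E u y"
  using degree_two_biclique.outside_adj_Y_imp_adj_X[OF swap_sides] B_sides by blast

lemma cbip_leaving_B:
  assumes "cbip S" "S \<subseteq> V" "z \<in> S" "z \<in> B" "w \<in> S" "w \<notin> B"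
  shows "S \<subseteq> B1 \<or> S \<subseteq> B2"
proof -
  obtain C where C: "biclique V E C" "S \<subseteq> C"
    using exists_biclique_superset assms(1,2) by blast
  then have "C = B \<or> C = B1 \<or> C = B2"
    using only_B1_B2 assms(3,4) by blast
  then show ?thesis
    using C(2) assms(5,6) by blast
qed

text \<open>Such vertices are false twins: an edge from one of them to a vertex outside B lies in
  B1 or in B2, hence so does the other one, and within a complete bipartite set two vertices
  of the same part have the same neighbours.\<close>

lemma X_eq_if_same_others:
  assumes "x \<in> X" "x' \<in> X" "x \<in> B1 \<longleftrightarrow> x' \<in> B1" "x \<in> B2 \<longleftrightarrow> x' \<in> B2"
  shows "x = x'"
proof -
  have transfer: "E b w"
    if ab: "a \<in> X" "b \<in> X" "a \<in> B1 \<longleftrightarrow> b \<in> B1" "a \<in> B2 \<longleftrightarrow> b \<in> B2" "E a w" for a b w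
  proof (cases "w \<in> Y")
    case True
    then show ?thesis
      using X_Y_adj ab(2) by blast
  next
    case False
    then have "w \<notin> B"
      using B_sides X_nonadj ab(1,5) by blast
    then have "{a, w} \<subseteq> B1 \<or> {a, w} \<subseteq> B2"
      using cbip_leaving_B[OF cbip_edge[OF ab(5)]] adj_memV1 adj_memV2 ab(1,5) B_sides by blast
    then obtain C where C: "C = B1 \<or> C = B2" "a \<in> C" "w \<in> C" "b \<in> C"
      using ab(3,4) by blast
    then show "E b w"
      using cbip_adj_iff[OF _ C(2,3,4) ab(5)] cbip_B1 cbip_B2 X_nonadj ab(1,2) adj_sym by blast
  qed
  show ?thesis
    using eq_if_same_adj[of x x'] assms X_subset_V transfer by blast
qed

lemma Y_eq_if_same_others:
  "y \<in> Y \<Longrightarrow> y' \<in> Y \<Longrightarrow> y \<in> B1 \<longleftrightarrow> y' \<in> B1 \<Longrightarrow> y \<in> B2 \<longleftrightarrow> y' \<in> B2 \<Longrightarrow> y = y'"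
  using degree_two_biclique.X_eq_if_same_others[OF swap_sides] .

lemma inj_on_membership_Y: "inj_on (membership B1 B2) Y"
  using Y_eq_if_same_others unfolding inj_on_def membership_def by blast

text \<open>B together with its neighbourhood is closed under adjacency: an edge leaving it would
  extend an edge out of B to an induced path z-k-w, which lies in B1 or in B2.\<close>

lemma outside_adj_B:
  assumes others: "\<And>c. c \<in> B1 \<union> B2 \<Longrightarrow> c \<notin> B \<Longrightarrow> \<exists>z\<in>B. E z c"
    and "w \<in> V" "w \<notin> B"
  shows "\<exists>z\<in>B. E z w"
proof -
  define N where "N = B \<union> {w. \<exists>z\<in>B. E z w}"
  obtain z where z: "z \<in> B"
    using B_sides X_nonempty by blast
  have "V \<subseteq> N"
  proof (rule V_subset_if_adj_closed)
    show "z \<in> N" "z \<in> V"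
      using z B_subset_V unfolding N_def by blast+
  next
    fix k w
    assume k: "k \<in> N" and kw: "E k w"
    show "w \<in> N"
    proof (rule ccontr)
      assume w: "w \<notin> N"
      then have "k \<notin> B"
        using kw unfolding N_def by blast
      then obtain z' where z': "z' \<in> B" "E z' k"
        using k unfolding N_def by blast
      have "\<not> E z' w" "w \<notin> B"
        using w z' unfolding N_def by blast+
      then have "{k, z', w} \<subseteq> B1 \<or> {k, z', w} \<subseteq> B2"
        using cbip_leaving_B[OF cbip_star[of k z' w]] z' kw adj_sym adj_memV1 adj_memV2 by blast
      then show False
        using others w \<open>k \<notin> B\<close> unfolding N_def by blast
    qed
  qed
  then show ?thesis
    using assms(2,3) unfolding N_def by blast
qed

lemma singletons_outside_adj_iff:
  assumes "X = {v}" "Y = {w}" "u \<in> V" "u \<notin> B"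
  shows "E v u \<longleftrightarrow> E w u"
  using outside_adj_X_imp_adj_Y[OF assms(3,4)] outside_adj_Y_imp_adj_X[OF assms(3,4)] assms(1,2)
    adj_sym by blast

end

locale triangle_setting = degree_two_biclique +
  fixes v w m
  assumes X_eq: "X = {v}" and Y_eq: "Y = {w}"
    and adj_v_m: "E v m" and m_neq_w: "m \<noteq> w"
    and v_m_in_B1: "{v, m} \<subseteq> B1" and w_m_in_B2: "{w, m} \<subseteq> B2"
begin

lemma B_eq: "B = {v, w}"
  using B_sides X_eq Y_eq by blast

lemma adj_v_w: "E v w"
  using X_Y_adj X_eq Y_eq by blast

lemma outside_adj_v_iff_w: "u \<in> V \<Longrightarrow> u \<notin> B \<Longrightarrow> E v u \<longleftrightarrow> E w u"
  using singletons_outside_adj_iff[OF X_eq Y_eq] .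

lemma v_notin_B2: "v \<notin> B2"
  using cbip_adj_iff[OF cbip_B2, of w m v] w_m_in_B2 adj_v_w adj_v_m adj_sym
    outside_adj_v_iff_w[of m] adj_memV2 m_neq_w adj_irrefl B_eq by blast

lemma nbr_v_in_B1:
  assumes "E v p" "p \<noteq> w"
  shows "p \<in> B1"
proof -
  have "p \<notin> B"
    using assms B_eq adj_irrefl by blast
  then have "{v, p} \<subseteq> B1 \<or> {v, p} \<subseteq> B2"
    using cbip_leaving_B[OF cbip_edge[OF assms(1)]] adj_memV1 adj_memV2 assms(1) B_eq by blast
  then show ?thesis
    using v_notin_B2 by blast
qed

lemma nbrs_v_same_adj:
  assumes "E v p" "p \<noteq> w" "E v p'" "p' \<noteq> w" "E p z"
  shows "E p' z"
proof (rule ccontr)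
  assume p'z: "\<not> E p' z"
  have "p' \<notin> B"
    using assms(3,4) B_eq adj_irrefl by blast
  then have "E w p'"
    using outside_adj_v_iff_w assms(3) adj_memV2 by blast
  then have "z \<notin> B"
    using p'z assms(3) adj_sym B_eq by blast
  have vz: "\<not> E v z"
  proof
    assume "E v z"
    then have "z \<in> B1"
      using nbr_v_in_B1 \<open>z \<notin> B\<close> B_eq by blast
    then show False
      using cbip_adj_iff[OF cbip_B1 _ nbr_v_in_B1[OF assms(1,2)], of v z] v_m_in_B1 assms(1,5)
        \<open>E v z\<close> by blast
  qed
  have "{p, v, z} \<subseteq> B1 \<or> {p, v, z} \<subseteq> B2"
    using cbip_leaving_B[OF cbip_star[of p v z]] assms(1,5) vz adj_sym adj_memV1 adj_memV2
      \<open>z \<notin> B\<close> B_eq by blast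
  then have "z \<in> B1"
    using v_notin_B2 by blast
  then show False
    using cbip_adj_iff[OF cbip_B1 _ nbr_v_in_B1[OF assms(3,4)], of v z] v_m_in_B1 assms(3) vz p'z
    by blast
qed

lemma adj_v_iff: "E v z \<longleftrightarrow> z = w \<or> z = m"
proof -
  have "z = m" if "E v z" "z \<noteq> w"
    using eq_if_same_adj[of z m] nbrs_v_same_adj[OF that adj_v_m m_neq_w]
      nbrs_v_same_adj[OF adj_v_m m_neq_w that] adj_memV2 that adj_v_m by blast
  then show ?thesis
    using adj_v_w adj_v_m by blast
qed

lemma adj_w_iff: "E w z \<longleftrightarrow> z = v \<or> z = m"
proof
  assume wz: "E w z"
  show "z = v \<or> z = m"
  proof (cases "z \<in> B")
    case True
    then show ?thesis
      using B_eq wz adj_irrefl by blast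
  next
    case False
    then have "E v z"
      using outside_adj_v_iff_w wz adj_memV2 by blast
    then show ?thesis
      using adj_v_iff False B_eq by blast
  qed
next
  have "m \<notin> B"
    using adj_v_m m_neq_w B_eq adj_irrefl by blast
  then show "z = v \<or> z = m \<Longrightarrow> E w z"
    using adj_v_w adj_v_m adj_sym outside_adj_v_iff_w adj_memV2 by blast
qed

lemma nbhd_m_indep: "independent_set E (nbhd V E m - {v, w})"
  unfolding independent_set_def
proof (intro ballI notI)
  have in_B1: "r \<in> B1" if "E m r" "r \<noteq> v" "r \<noteq> w" for r
  proof -
    have "\<not> E v r"
      using adj_v_iff that adj_irrefl by blast
    then have "{m, v, r} \<subseteq> B1 \<or> {m, v, r} \<subseteq> B2"
      using cbip_leaving_B[OF cbip_star[of m v r]] that(1) adj_v_m adj_sym adj_memV1 adj_memV2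
        that(2,3) B_eq by blast
    then show ?thesis
      using v_notin_B2 by blast
  qed
  fix p q
  assume "p \<in> nbhd V E m - {v, w}" "q \<in> nbhd V E m - {v, w}" "E p q"
  then show False
    using cbip_adj_iff[OF cbip_B1, of m p q] in_B1 v_m_in_B1 unfolding nbhd_def by blast
qed

lemma triangle: "triangle_biclique B"
  unfolding triangle_biclique_def
proof (intro exI conjI)
  show "v \<noteq> w" "m \<noteq> v" "m \<noteq> w" "m \<in> V"
    using adj_v_w adj_v_m m_neq_w adj_irrefl adj_memV2 by blast+
  show "closed_nbhd V E v = {v, w, m}" "closed_nbhd V E w = {v, w, m}"
    unfolding closed_nbhd_def nbhd_def using adj_v_iff adj_w_iff adj_memV1 adj_memV2 by blast+
qed (use B_eq adj_v_w nbhd_m_indep in auto)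

end

context degree_two_biclique
begin

lemma triangle_if_singleton_sides:
  assumes X: "X = {v}" and Y: "Y = {w}"
  shows "triangle_biclique B"
proof -
  have B: "B = {v, w}" and vw: "E v w"
    using B_sides X_Y_adj X Y by blast+
  have "card B < card V"
    using card_V B by (simp add: card_insert_if)
  then obtain s m where "s \<in> B" "m \<notin> B" "E s m"
    using exists_edge_leaving[of v B] B B_subset_V by blast
  moreover have "m \<in> V"
    using \<open>E s m\<close> adj_memV2 by blast
  ultimately have vm: "E v m" and wm: "E w m"
    using singletons_outside_adj_iff[OF X Y, of m] B by auto
  obtain Cv where Cv: "biclique V E Cv" "{v, m} \<subseteq> Cv"
    using exists_biclique_superset[OF cbip_edge[OF vm]] adj_memV1 adj_memV2 vm by blast
  obtain Cw where Cw: "biclique V E Cw" "{w, m} \<subseteq> Cw"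
    using exists_biclique_superset[OF cbip_edge[OF wm]] adj_memV1 adj_memV2 wm by blast
  have "w \<notin> Cv"
    using cbip_adj_iff[OF biclique_cbip[OF Cv(1)], of v m w] Cv(2) vm vw wm adj_sym by blast
  have reindexed: "degree_two_biclique V E B X Y Cv Cw"
  proof (rule reindex_others)
    show "Cv \<inter> B \<noteq> {}" "Cw \<inter> B \<noteq> {}" "Cv \<noteq> B" "Cw \<noteq> B" "Cv \<noteq> Cw"
      using Cv(2) Cw(2) \<open>m \<notin> B\<close> \<open>w \<notin> Cv\<close> B by blast+
  qed (fact Cv(1) Cw(1))+
  have "triangle_setting V E B X Y Cv Cw v w m"
    using reindexed X Y vm \<open>m \<notin> B\<close> B Cv(2) Cw(2)
    by (simp add: triangle_setting_def triangle_setting_axioms_def)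
  then show ?thesis
    by (rule triangle_setting.triangle)
qed

end

locale star_setting = degree_two_biclique +
  fixes b
  assumes X_eq: "X = {b}" and adj_b_imp_Y: "\<And>z. E b z \<Longrightarrow> z \<in> Y"
begin

lemma b_in_B: "b \<in> B"
  using B_sides X_eq by blast

lemma b_in_V: "b \<in> V"
  using b_in_B B_subset_V by blast

lemma adj_b_iff: "E b z \<longleftrightarrow> z \<in> Y"
  using adj_b_imp_Y X_Y_adj X_eq by blast

lemma Y_adj_b: "y \<in> Y \<Longrightarrow> E y b"
  using adj_b_iff adj_sym by blast

lemma B_iff: "z \<in> B \<longleftrightarrow> z = b \<or> z \<in> Y"
  using B_sides X_eq by blast

lemma outside_nonadj_b: "q \<notin> B \<Longrightarrow> \<not> E b q"
  using adj_b_iff B_iff by blast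

definition pendant :: "'a \<Rightarrow> bool" where
  "pendant y \<longleftrightarrow> (\<forall>z. E y z \<longleftrightarrow> z = b)"

lemma pendant_unique: "y \<in> Y \<Longrightarrow> y' \<in> Y \<Longrightarrow> pendant y \<Longrightarrow> pendant y' \<Longrightarrow> y = y'"
  using eq_if_same_adj[of y y'] Y_subset_V unfolding pendant_def by blast

lemma nonpendant_outside_nbr:
  assumes "y \<in> Y" "\<not> pendant y"
  shows "\<exists>q. E y q \<and> q \<notin> B"
proof -
  obtain q where "\<not> (E y q \<longleftrightarrow> q = b)"
    using assms(2) unfolding pendant_def by blast
  then have "E y q" "q \<noteq> b"
    using Y_adj_b assms(1) by blast+
  then have "q \<notin> B"
    using B_iff Y_nonadj assms(1) by blast
  then show ?thesis
    using \<open>E y q\<close> by blast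
qed

lemma outside_edge_in_other:
  assumes "y \<in> Y" "E y q" "q \<notin> B"
  shows "{b, y, q} \<subseteq> B1 \<or> {b, y, q} \<subseteq> B2"
proof -
  have "cbip {y, b, q}"
    using cbip_star Y_adj_b assms outside_nonadj_b by blast
  moreover have "{y, b, q} \<subseteq> V"
    using assms(1,2) Y_subset_V b_in_V adj_memV2 by blast
  ultimately have "{y, b, q} \<subseteq> B1 \<or> {y, b, q} \<subseteq> B2"
    using cbip_leaving_B b_in_B assms(3) by blast
  then show ?thesis
    by (simp add: insert_commute)
qed

lemma pendant_path_if_nonpendant_unique:
  assumes ys: "ya \<in> Y" "yb \<in> Y" "ya \<noteq> yb"
    and nonpendant_unique: "\<And>y y'. y \<in> Y \<Longrightarrow> y' \<in> Y \<Longrightarrow> \<not> pendant y \<Longrightarrow> \<not> pendant y' \<Longrightarrow> y = y'"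
  shows "pendant_path_biclique B"
proof -
  have "pendant ya \<or> pendant yb"
    using nonpendant_unique ys by blast
  then obtain a c where ac: "a \<in> Y" "c \<in> Y" "pendant a" "\<not> pendant c"
    using ys pendant_unique by blast
  have "y = a \<or> y = c" if "y \<in> Y" for y
    using pendant_unique[OF that ac(1)] nonpendant_unique[OF that ac(2)] ac(3,4) by blast
  then have Y: "Y = {a, c}"
    using ac(1,2) by blast
  have ab: "E a z \<longleftrightarrow> z = b" for z
    using ac(3) unfolding pendant_def by blast
  show ?thesis
    unfolding pendant_path_biclique_def
  proof (intro exI conjI)
    show "B = {a, b, c}"
      using B_iff Y by blast
    show "a \<noteq> b" "b \<noteq> c" "a \<noteq> c"
      using ac X_eq sides_disjoint by blast+
    show "E a b"
      using ab by blast
    show "\<not> E a c"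
      using ac(1,2) Y_nonadj by blast
    show "E b c"
      using adj_b_iff ac(2) by blast
    show "nbhd V E a = {b}"
      using ab b_in_V unfolding nbhd_def by auto
    show "nbhd V E b = {a, c}"
      using adj_b_iff Y Y_subset_V unfolding nbhd_def by auto
  qed
qed

lemma outside_edge_in_other_with_b:
  assumes "\<not> (b \<in> B1 \<and> b \<in> B2)" "C = B1 \<or> C = B2" "b \<in> C" "y \<in> Y" "E y q" "q \<notin> B"
  shows "y \<in> C" "q \<in> C"
  using outside_edge_in_other[OF assms(4-6)] assms(1-3) by blast+

lemma nonpendant_unique_if_b_in_one_other:
  assumes one: "\<not> (b \<in> B1 \<and> b \<in> B2)"
    and y: "y \<in> Y" "\<not> pendant y" and y': "y' \<in> Y" "\<not> pendant y'"
  shows "y = y'"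
proof -
  obtain q where q: "E y q" "q \<notin> B"
    using nonpendant_outside_nbr y by blast
  then obtain C where C: "C = B1 \<or> C = B2" "b \<in> C" "y \<in> C"
    using outside_edge_in_other[OF y(1) q] by blast
  have in_C: "p \<in> C" "z \<in> C" if "p \<in> Y" "E p z" "z \<notin> B" for p z
    using outside_edge_in_other_with_b[OF one C(1,2) that] by blast+
  have "y' \<in> C"
    using nonpendant_outside_nbr[OF y'] in_C(1) y'(1) by blast
  have transfer: "E p z" if p: "p \<in> Y" "p \<in> C" and p': "p' \<in> Y" "E p' z" for p p' z
  proof (cases "z = b")
    case True
    then show ?thesis
      using Y_adj_b p(1) by blast
  next
    case False
    then have "z \<notin> B"
      using B_iff Y_nonadj p' by blast
    then show ?thesis
      using cbip_adj_iff[OF _ C(2) p(2) in_C(2)[OF p']] C(1) cbip_B1 cbip_B2 adj_b_iff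
        outside_nonadj_b p(1) by blast
  qed
  show ?thesis
  proof (rule eq_if_same_adj)
    show "y \<in> V" "y' \<in> V"
      using Y_subset_V y(1) y'(1) by blast+
    show "E y z \<longleftrightarrow> E y' z" for z
      using transfer[OF y(1) C(3) y'(1)] transfer[OF y'(1) \<open>y' \<in> C\<close> y(1)] by blast
  qed
qed

lemma nonpendant_unique_if_same_Y_parts:
  assumes same: "B1 \<inter> Y = B2 \<inter> Y"
    and y: "y \<in> Y" "\<not> pendant y" and y': "y' \<in> Y" "\<not> pendant y'"
  shows "y = y'"
proof -
  have "p \<in> B1" if "p \<in> Y" "\<not> pendant p" for p
    using nonpendant_outside_nbr[OF that] outside_edge_in_other that(1) same by blast
  then show ?thesis
    using Y_eq_if_same_others[OF y(1) y'(1)] y y' same by blast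
qed

end

locale star_in_both = star_setting +
  assumes b_in_B1: "b \<in> B1" and b_in_B2: "b \<in> B2"
    and Y_parts_differ: "B1 \<inter> Y \<noteq> B2 \<inter> Y"
begin

lemma swap_others: "star_in_both V E B X Y B2 B1 b"
proof -
  have "degree_two_biclique V E B X Y B2 B1"
    using biclique_B1 biclique_B2 B1_meets_B B2_meets_B B1_neq_B B2_neq_B B1_neq_B2
    by (intro reindex_others) simp_all
  then show ?thesis
    unfolding star_in_both_def star_in_both_axioms_def star_setting_def star_setting_axioms_def
    using X_eq adj_b_imp_Y b_in_B1 b_in_B2 Y_parts_differ by auto
qed

lemma other_cbip_contains_b: "C = B1 \<or> C = B2 \<Longrightarrow> cbip C \<and> b \<in> C"
  using cbip_B1 cbip_B2 b_in_B1 b_in_B2 by blast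

lemma Y_adj_outside_in_other:
  assumes "C = B1 \<or> C = B2" "y \<in> Y" "y \<in> C" "q \<in> C" "q \<notin> B"
  shows "E y q"
proof -
  have "cbip C" "b \<in> C"
    using other_cbip_contains_b assms(1) by blast+
  moreover have "E b y"
    using adj_b_iff assms(2) by blast
  ultimately show ?thesis
    using cbip_adj_iff[of C b y q] assms(3,4) outside_nonadj_b[OF assms(5)] by blast
qed

lemma other_meets_Y:
  assumes "C = B1 \<or> C = B2"
  shows "\<exists>y\<in>Y. y \<in> C"
proof -
  obtain y where "y \<in> C" "E b y"
    using cbip_has_neighbour other_cbip_contains_b[OF assms] by blast
  then show ?thesis
    using adj_b_iff by blast
qed

lemma other_outside_nonadj:
  assumes "C = B1 \<or> C = B2" "q \<in> C" "r \<in> C" "q \<notin> B" "r \<notin> B"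
  shows "\<not> E q r"
proof -
  obtain y where y: "y \<in> Y" "y \<in> C"
    using other_meets_Y[OF assms(1)] by blast
  then have "E y q" "E y r"
    using Y_adj_outside_in_other assms by blast+
  then show ?thesis
    using cbip_adj_iff[of C y q r] other_cbip_contains_b[OF assms(1)] y(2) assms(2,3) by blast
qed

lemma outside_edge_switches_other:
  assumes C: "C = B1 \<or> C = B2" and q: "q \<in> C" "q \<notin> B" and r: "r \<notin> B" "E q r"
    and y: "y \<in> Y" "y \<in> C"
  shows "\<exists>C'. (C' = B1 \<or> C' = B2) \<and> C' \<noteq> C \<and> y \<in> C' \<and> r \<in> C'"
proof -
  have "E q y"
    using Y_adj_outside_in_other[OF C y q] adj_sym by blast
  have "E y r"
  proof (rule ccontr)
    assume yr: "\<not> E y r"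
    have "{q, y, r} \<subseteq> V"
      using y(1) Y_subset_V r(2) adj_memV1 adj_memV2 by blast
    moreover have "y \<in> B"
      using y(1) B_iff by blast
    ultimately have "{q, y, r} \<subseteq> B1 \<or> {q, y, r} \<subseteq> B2"
      using cbip_leaving_B[OF cbip_star[OF \<open>E q y\<close> r(2) yr], of y r] r(1) by blast
    then obtain C' where "C' = B1 \<or> C' = B2" "y \<in> C'" "r \<in> C'"
      by blast
    then show False
      using Y_adj_outside_in_other y(1) r(1) yr by blast
  qed
  then obtain C' where C': "C' = B1 \<or> C' = B2" "y \<in> C'" "r \<in> C'"
    using outside_edge_in_other[OF y(1) _ r(1)] by blast
  have "C' \<noteq> C"
    using other_outside_nonadj[OF C q(1) _ q(2) r(1)] C'(3) r(2) by blast
  then show ?thesis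
    using C' by blast
qed

lemma outside_adj_Y:
  assumes "q \<in> V" "q \<notin> B"
  shows "\<exists>y\<in>Y. E y q \<and> (\<exists>C. (C = B1 \<or> C = B2) \<and> y \<in> C \<and> q \<in> C)"
proof -
  have dominated: "\<exists>z\<in>B. E z c" if c: "c \<in> B1 \<union> B2" "c \<notin> B" for c
  proof -
    obtain C where C: "C = B1 \<or> C = B2" "c \<in> C"
      using c(1) by blast
    obtain y where "y \<in> Y" "y \<in> C"
      using other_meets_Y[OF C(1)] by blast
    then have "E y c" "y \<in> B"
      using Y_adj_outside_in_other[OF C(1) _ _ C(2) c(2)] B_iff by blast+
    then show ?thesis
      by blast
  qed
  obtain z where z: "z \<in> B" "E z q"
    using outside_adj_B[OF dominated assms] by blast
  then have "z \<in> Y"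
    using outside_nonadj_b[OF assms(2)] B_iff by auto
  then have "{b, z, q} \<subseteq> B1 \<or> {b, z, q} \<subseteq> B2"
    using outside_edge_in_other[OF _ z(2) assms(2)] by blast
  then show ?thesis
    using \<open>z \<in> Y\<close> z(2) by blast
qed

lemma outside_nonadj:
  assumes q: "q \<in> V" "q \<notin> B" and r: "r \<notin> B"
  shows "\<not> E q r"
proof
  assume qr: "E q r"
  obtain y C where y: "y \<in> Y" and C: "C = B1 \<or> C = B2" "y \<in> C" "q \<in> C"
    using outside_adj_Y[OF q] by blast
  obtain C' where C': "C' = B1 \<or> C' = B2" "C' \<noteq> C" "r \<in> C'"
    using outside_edge_switches_other[OF C(1,3) q(2) r qr y C(2)] by blast
  have "y' \<in> C'" if "y' \<in> Y" "y' \<in> C" for y'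
    using outside_edge_switches_other[OF C(1,3) q(2) r qr that] C C' by blast
  moreover have "y' \<in> C" if "y' \<in> Y" "y' \<in> C'" for y'
    using outside_edge_switches_other[OF C'(1,3) r q(2) adj_sym[OF qr] that] C C' by blast
  ultimately have "C \<inter> Y = C' \<inter> Y"
    by blast
  then show False
    using Y_parts_differ C(1) C'(1,2) by blast
qed

lemma outside_adj_iff:
  assumes "q \<in> V" "q \<notin> B"
  shows "E q z \<longleftrightarrow> z \<in> Y \<and> (z \<in> B1 \<and> q \<in> B1 \<or> z \<in> B2 \<and> q \<in> B2)"
proof
  assume qz: "E q z"
  then have "z \<in> B"
    using outside_nonadj[OF assms] by blast
  moreover have "z \<noteq> b"
    using outside_nonadj_b[OF assms(2)] qz adj_sym by blast
  ultimately have "z \<in> Y"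
    using B_iff by blast
  then show "z \<in> Y \<and> (z \<in> B1 \<and> q \<in> B1 \<or> z \<in> B2 \<and> q \<in> B2)"
    using outside_edge_in_other[OF _ adj_sym[OF qz] assms(2)] by blast
next
  assume "z \<in> Y \<and> (z \<in> B1 \<and> q \<in> B1 \<or> z \<in> B2 \<and> q \<in> B2)"
  then show "E q z"
    using Y_adj_outside_in_other assms(2) adj_sym by blast
qed

lemma inj_on_membership_outside: "inj_on (membership B1 B2) (V - B)"
proof (rule inj_onI)
  fix q r
  assume q: "q \<in> V - B" and r: "r \<in> V - B" and "membership B1 B2 q = membership B1 B2 r"
  then have "q \<in> B1 \<longleftrightarrow> r \<in> B1" "q \<in> B2 \<longleftrightarrow> r \<in> B2"
    unfolding membership_def by simp_all
  then show "q = r"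
    using eq_if_same_adj[of q r] outside_adj_iff q r by blast
qed

lemma outside_in_other: "q \<in> V \<Longrightarrow> q \<notin> B \<Longrightarrow> q \<in> B1 \<or> q \<in> B2"
  using outside_adj_Y by blast

lemma outside_not_in_both:
  assumes no_common: "\<forall>y\<in>Y. \<not> (y \<in> B1 \<and> y \<in> B2)" and q: "q \<in> V" "q \<notin> B"
  shows "\<not> (q \<in> B1 \<and> q \<in> B2)"
proof
  assume q12: "q \<in> B1 \<and> q \<in> B2"
  obtain y1 where y1: "y1 \<in> Y" "y1 \<in> B1"
    using other_meets_Y[of B1] by blast
  obtain y2 where y2: "y2 \<in> Y" "y2 \<in> B2"
    using other_meets_Y[of B2] by blast
  have "E q y1" "E q y2"
    using outside_adj_iff[OF q] q12 y1 y2 by blast+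
  moreover have "\<not> E y1 y2"
    using Y_nonadj y1(1) y2(1) by blast
  moreover have "{q, y1, y2} \<subseteq> V"
    using q(1) Y_subset_V y1(1) y2(1) by blast
  moreover have "y1 \<in> B"
    using y1(1) B_iff by blast
  ultimately have "{q, y1, y2} \<subseteq> B1 \<or> {q, y1, y2} \<subseteq> B2"
    using cbip_leaving_B[OF cbip_star, of q y1 y2 y1 q] q(2) by blast
  then show False
    using no_common y1 y2 by blast
qed

lemma Y_in_B1_imp_in_B2:
  assumes nested: "B2 - B \<subseteq> B1" and y12: "y12 \<in> Y" "y12 \<in> B1" "y12 \<in> B2"
    and y: "y \<in> Y" "y \<in> B1"
  shows "y \<in> B2"
proof (rule ccontr)
  assume "y \<notin> B2"
  have "E y z \<longleftrightarrow> E y12 z" for z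
  proof (cases "z \<in> V \<and> z \<notin> B")
    case True
    then have "E y z \<longleftrightarrow> z \<in> B1" "E y12 z \<longleftrightarrow> z \<in> B1"
      using outside_adj_iff[of z y] outside_adj_iff[of z y12] adj_sym y y12 \<open>y \<notin> B2\<close> nested
      by auto
    then show ?thesis
      by simp
  next
    case False
    then consider "z \<notin> V" | "z = b" | "z \<in> Y"
      using B_iff by auto
    then show ?thesis
      by cases (use adj_memV2 Y_adj_b Y_nonadj y(1) y12(1) in auto)
  qed
  then have "y = y12"
    using eq_if_same_adj Y_subset_V y(1) y12(1) by blast
  then show False
    using \<open>y \<notin> B2\<close> y12(3) by blast
qed

lemma outside_others_indep: "independent_set E (insert b ((B1 - B) \<union> (B2 - B)))"
proof -
  have "\<not> E p q" if "p = b \<or> p \<in> V \<and> p \<notin> B" "q = b \<or> q \<in> V \<and> q \<notin> B" for p q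
    using that
  proof (elim disjE conjE)
    show "p = b \<Longrightarrow> q = b \<Longrightarrow> \<not> E p q"
      using adj_irrefl by simp
    show "p = b \<Longrightarrow> q \<notin> B \<Longrightarrow> \<not> E p q"
      using outside_nonadj_b by simp
    show "p \<in> V \<Longrightarrow> p \<notin> B \<Longrightarrow> q = b \<Longrightarrow> \<not> E p q"
      using outside_nonadj_b adj_sym by blast
    show "p \<in> V \<Longrightarrow> p \<notin> B \<Longrightarrow> q \<notin> B \<Longrightarrow> \<not> E p q"
      using outside_nonadj by blast
  qed
  moreover have "B1 \<subseteq> V" "B2 \<subseteq> V"
    using biclique_subset_V biclique_B1 biclique_B2 by blast+
  ultimately show ?thesis
    unfolding independent_set_def by blast
qed

text \<open>A vertex of Y in both B1 and B2 is the centre of a star whose leaves are b and all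
  vertices of B1 and B2 outside B; the biclique containing it is B1 or B2.\<close>

lemma common_Y_imp_nested:
  assumes y12: "y12 \<in> Y" "y12 \<in> B1" "y12 \<in> B2"
  shows "B2 - B \<subseteq> B1 \<or> B1 - B \<subseteq> B2"
proof -
  define N where "N = insert b ((B1 - B) \<union> (B2 - B))"
  have "N \<subseteq> V"
    unfolding N_def using b_in_V biclique_subset_V biclique_B1 biclique_B2 by blast
  have "independent_set E N"
    unfolding N_def by (rule outside_others_indep)
  moreover have "E y12 p" if "p \<in> N" for p
    using that Y_adj_b[OF y12(1)] Y_adj_outside_in_other[of B1 y12 p]
      Y_adj_outside_in_other[of B2 y12 p] y12 unfolding N_def by blast
  moreover have "independent_set E {y12}"
    using adj_irrefl unfolding independent_set_def by blast
  ultimately have "cbip ({y12} \<union> N)"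
    by (intro cbipI) (auto simp: N_def)
  moreover have "{y12} \<union> N \<subseteq> V"
    using \<open>N \<subseteq> V\<close> y12(1) Y_subset_V by blast
  ultimately obtain C where C: "biclique V E C" "{y12} \<union> N \<subseteq> C"
    using exists_biclique_superset by blast
  have "C \<inter> B \<noteq> {}"
    using C(2) y12(1) B_iff by blast
  moreover have "C \<noteq> B"
    using C(2) B1_not_subset_B unfolding N_def by blast
  ultimately have "C = B1 \<or> C = B2"
    using only_B1_B2 C(1) by blast
  then show ?thesis
    using C(2) unfolding N_def by blast
qed

lemma card_bound_if_nested:
  assumes nested: "B2 - B \<subseteq> B1" and y12: "y12 \<in> Y" "y12 \<in> B1" "y12 \<in> B2"
  shows "card Y \<le> 3 \<and> card (V - B) \<le> 2"
proof
  have "(True, False) \<notin> membership B1 B2 ` Y"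
    using Y_in_B1_imp_in_B2[OF nested y12] unfolding membership_def by auto
  then show "card Y \<le> 3"
    using card_le_3_if_inj_avoids[OF inj_on_membership_Y] by blast
  have "membership B1 B2 ` (V - B) \<subseteq> {(True, False), (True, True)}"
    using outside_in_other nested unfolding membership_def by auto
  then show "card (V - B) \<le> 2"
    using card_le_2_if_inj_into_pair[OF inj_on_membership_outside] by blast
qed

lemma card_bound_if_no_common:
  assumes no_common: "\<forall>y\<in>Y. \<not> (y \<in> B1 \<and> y \<in> B2)"
  shows "card Y \<le> 3 \<and> card (V - B) \<le> 2"
proof
  have "(True, True) \<notin> membership B1 B2 ` Y"
    using no_common unfolding membership_def by auto
  then show "card Y \<le> 3"
    using card_le_3_if_inj_avoids[OF inj_on_membership_Y] by blast
  have "membership B1 B2 ` (V - B) \<subseteq> {(True, False), (False, True)}"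
    using outside_in_other outside_not_in_both[OF no_common] unfolding membership_def by auto
  then show "card (V - B) \<le> 2"
    using card_le_2_if_inj_into_pair[OF inj_on_membership_outside] by blast
qed

lemma contradiction: False
proof -
  have bound: "card Y \<le> 3 \<and> card (V - B) \<le> 2"
  proof (cases "\<exists>y\<in>Y. y \<in> B1 \<and> y \<in> B2")
    case True
    then obtain y12 where y12: "y12 \<in> Y" "y12 \<in> B1" "y12 \<in> B2"
      by blast
    then consider "B2 - B \<subseteq> B1" | "B1 - B \<subseteq> B2"
      using common_Y_imp_nested by blast
    then show ?thesis
    proof cases
      case 1
      then show ?thesis
        using card_bound_if_nested y12 by blast
    next
      case 2
      then show ?thesis
        using star_in_both.card_bound_if_nested[OF swap_others] y12 by blast
    qed
  next
    case False
    then show ?thesis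
      using card_bound_if_no_common by blast
  qed
  have "finite Y" "finite (V - B)"
    using finite_V Y_subset_V finite_subset by blast+
  have "V \<subseteq> insert b (Y \<union> (V - B))"
    using B_iff by blast
  then have "card V \<le> card (insert b (Y \<union> (V - B)))"
    using \<open>finite Y\<close> \<open>finite (V - B)\<close> by (intro card_mono) auto
  also have "\<dots> \<le> Suc (card (Y \<union> (V - B)))"
    using \<open>finite Y\<close> \<open>finite (V - B)\<close> by (simp add: card_insert_if)
  also have "\<dots> \<le> Suc (card Y + card (V - B))"
    using card_Un_le by simp
  finally show False
    using bound card_V by linarith
qed

end

context star_setting
begin

lemma pendant_path:
  assumes "ya \<in> Y" "yb \<in> Y" "ya \<noteq> yb"
  shows "pendant_path_biclique B"
proof (rule pendant_path_if_nonpendant_unique[OF assms])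
  fix y y'
  assume y: "y \<in> Y" "\<not> pendant y" and y': "y' \<in> Y" "\<not> pendant y'"
  consider "\<not> (b \<in> B1 \<and> b \<in> B2)" | "B1 \<inter> Y = B2 \<inter> Y" | "b \<in> B1" "b \<in> B2" "B1 \<inter> Y \<noteq> B2 \<inter> Y"
    by blast
  then show "y = y'"
  proof cases
    case 1
    then show ?thesis
      using nonpendant_unique_if_b_in_one_other y y' by blast
  next
    case 2
    then show ?thesis
      using nonpendant_unique_if_same_Y_parts y y' by blast
  next
    case 3
    then have "star_in_both V E B X Y B1 B2 b"
      by (intro star_in_both.intro star_setting_axioms) (simp add: star_in_both_axioms_def)
    then have False
      by (rule star_in_both.contradiction)
    then show ?thesis ..
  qed
qed

end

locale centre_escape_setting = degree_two_biclique +
  fixes b u y0 y1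
  assumes X_eq: "X = {b}"
    and u_outside: "u \<in> V" "u \<notin> B" and adj_b_u: "E b u"
    and y1_in_Y: "y1 \<in> Y" and adj_u_y1: "E u y1"
    and y0_in_Y: "y0 \<in> Y" and y0_neq_y1: "y0 \<noteq> y1"
    and b_u_in_B1: "{b, u} \<subseteq> B1" and y1_u_in_B2: "{y1, u} \<subseteq> B2"
begin

lemma B_iff: "z \<in> B \<longleftrightarrow> z = b \<or> z \<in> Y"
  using B_sides X_eq by blast

lemma b_in_V: "b \<in> V"
  using B_iff B_subset_V by blast

lemma Y_adj_b: "y \<in> Y \<Longrightarrow> E b y" "y \<in> Y \<Longrightarrow> E y b"
  using X_Y_adj Y_X_adj X_eq by blast+

lemma b_notin_B2: "b \<notin> B2"
  using cbip_adj_iff[OF cbip_B2, of y1 u b] y1_u_in_B2 adj_u_y1 adj_b_u adj_sym Y_adj_b y1_in_Y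
  by blast

lemma cbip_through_b_in_B1:
  assumes "cbip S" "S \<subseteq> V" "b \<in> S" "w \<in> S" "w \<notin> B"
  shows "S \<subseteq> B1"
  using cbip_leaving_B[OF assms(1,2,3) _ assms(4,5)] B_iff assms(3) b_notin_B2 by blast

lemma escape_in_B1: "E b q \<Longrightarrow> q \<notin> B \<Longrightarrow> q \<in> B1"
  using cbip_through_b_in_B1[OF cbip_edge, of b q] b_in_V adj_memV2 by blast

lemma Y_escape_nbr_notin_B1:
  assumes "y \<in> Y" "E b q" "q \<notin> B" "E y q"
  shows "y \<notin> B1"
  using cbip_adj_iff[OF cbip_B1 _ escape_in_B1[OF assms(2,3)], of b y] b_u_in_B1 assms
    Y_adj_b adj_sym by blast

lemma Y_escape_nbr_adj_b:
  assumes "y \<in> Y" "E b q'" "q' \<notin> B" "E y q'" "E y q" "q \<noteq> b"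
  shows "E b q"
proof (rule ccontr)
  assume bq: "\<not> E b q"
  have "q \<notin> B"
    using assms(1,5,6) B_iff Y_nonadj by blast
  moreover have "{y, b, q} \<subseteq> V"
    using assms(1,5) Y_subset_V b_in_V adj_memV2 by blast
  ultimately have "{y, b, q} \<subseteq> B1"
    using cbip_through_b_in_B1[OF cbip_star[OF Y_adj_b(2)[OF assms(1)] assms(5) bq]] by blast
  then show False
    using Y_escape_nbr_notin_B1[OF assms(1-4)] by blast
qed

lemma Y_escape_nbr_adj_escapes:
  assumes "y \<in> Y" "E b q'" "q' \<notin> B" "E y q'" "E b q" "q \<notin> B"
  shows "E y q"
proof (rule ccontr)
  assume yq: "\<not> E y q"
  have "{b, y, q} \<subseteq> V"
    using assms(1,5) Y_subset_V b_in_V adj_memV2 by blast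
  then have "{b, y, q} \<subseteq> B1"
    using cbip_through_b_in_B1[OF cbip_star[OF Y_adj_b(1)[OF assms(1)] assms(5) yq]] assms(6)
    by blast
  then show False
    using Y_escape_nbr_notin_B1[OF assms(1-4)] by blast
qed

lemma Y_escape_nbr_adj_iff:
  assumes "y \<in> Y" "E b q'" "q' \<notin> B" "E y q'"
  shows "E y z \<longleftrightarrow> z = b \<or> E b z \<and> z \<notin> B"
proof
  assume yz: "E y z"
  show "z = b \<or> E b z \<and> z \<notin> B"
  proof (cases "z = b")
    case False
    then have "z \<notin> B"
      using yz assms(1) B_iff Y_nonadj by blast
    then show ?thesis
      using Y_escape_nbr_adj_b[OF assms yz False] by blast
  qed simp
next
  show "z = b \<or> E b z \<and> z \<notin> B \<Longrightarrow> E y z"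
    using Y_adj_b(2)[OF assms(1)] Y_escape_nbr_adj_escapes[OF assms] by blast
qed

lemma Y_escape_nbr_eq_y1:
  assumes "y \<in> Y" "E b q" "q \<notin> B" "E y q"
  shows "y = y1"
  using eq_if_same_adj[of y y1] Y_escape_nbr_adj_iff[OF assms]
    Y_escape_nbr_adj_iff[OF y1_in_Y adj_b_u u_outside(2) adj_sym[OF adj_u_y1]]
    Y_subset_V assms(1) y1_in_Y by blast

lemma y0_nonadj_escape: "E b q \<Longrightarrow> q \<notin> B \<Longrightarrow> \<not> E y0 q"
  using Y_escape_nbr_eq_y1 y0_in_Y y0_neq_y1 by blast

lemma Y_other_in_B1:
  assumes "y \<in> Y" "y \<noteq> y1"
  shows "y \<in> B1"
proof -
  have "\<not> E u y"
    using Y_escape_nbr_eq_y1[OF assms(1) adj_b_u u_outside(2)] assms(2) adj_sym by blast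
  moreover have "{b, u, y} \<subseteq> V"
    using b_in_V u_outside(1) Y_subset_V assms(1) by blast
  ultimately have "{b, u, y} \<subseteq> B1"
    using cbip_through_b_in_B1[OF cbip_star[OF adj_b_u Y_adj_b(1)[OF assms(1)]]] u_outside(2)
    by blast
  then show ?thesis
    by blast
qed

lemma Y_other_nbr:
  assumes "y \<in> Y" "y \<noteq> y1" "E y q" "q \<noteq> b"
  shows "q \<in> B1" "E u q" "\<not> E b q"
proof -
  have "q \<notin> B"
    using assms B_iff Y_nonadj by blast
  show bq: "\<not> E b q"
    using Y_escape_nbr_eq_y1[OF assms(1) _ \<open>q \<notin> B\<close> assms(3)] assms(2) by blast
  have "{y, b, q} \<subseteq> V"
    using assms(1,3) Y_subset_V b_in_V adj_memV2 by blast
  then show "q \<in> B1"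
    using cbip_through_b_in_B1[OF cbip_star[OF Y_adj_b(2)[OF assms(1)] assms(3) bq]]
      \<open>q \<notin> B\<close> by blast
  then show "E u q"
    using cbip_adj_iff[OF cbip_B1 _ _ _ adj_b_u] b_u_in_B1 bq by blast
qed

lemma Y_eq: "Y = {y0, y1}"
proof -
  have transfer: "E p q" if "p \<in> Y" "p \<noteq> y1" "p' \<in> Y" "p' \<noteq> y1" "E p' q" for p p' q
  proof (cases "q = b")
    case True
    then show ?thesis
      using Y_adj_b that(1) by blast
  next
    case False
    then show ?thesis
      using cbip_adj_iff[OF cbip_B1, of b p q] b_u_in_B1 Y_other_in_B1[OF that(1,2)]
        Y_other_nbr[OF that(3-5) False] Y_adj_b(1)[OF that(1)] by blast
  qed
  have "y = y0" if "y \<in> Y" "y \<noteq> y1" for y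
    using eq_if_same_adj[of y y0] transfer[OF that] transfer[OF y0_in_Y y0_neq_y1 that]
      Y_subset_V that(1) y0_in_Y y0_neq_y1 by blast
  then show ?thesis
    using y0_in_Y y1_in_Y by blast
qed

lemma escape_eq_u:
  assumes "E b q" "q \<notin> B"
  shows "q = u"
proof -
  have transfer: "E q' p" if q: "E b q" "q \<notin> B" and q': "E b q'" "q' \<notin> B" and "E q p" for q q' p
  proof (rule ccontr)
    assume q'p: "\<not> E q' p"
    have "p \<noteq> b"
      using q'p q'(1) adj_sym by blast
    moreover have "p \<noteq> y1"
      using q'p Y_escape_nbr_adj_escapes[OF y1_in_Y adj_b_u u_outside(2) adj_sym[OF adj_u_y1] q']
        adj_sym by blast
    moreover have "p \<noteq> y0"
      using y0_nonadj_escape[OF q] \<open>E q p\<close> adj_sym by blast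
    ultimately have "p \<notin> B"
      using B_iff Y_eq by blast
    have bp: "\<not> E b p"
      using cbip_adj_iff[OF cbip_B1 _ escape_in_B1[OF q] escape_in_B1, of b p] b_u_in_B1 q(1)
        \<open>E q p\<close> \<open>p \<notin> B\<close> by blast
    have "{q, b, p} \<subseteq> V"
      using \<open>E q p\<close> adj_memV1 adj_memV2 b_in_V by blast
    then have "p \<in> B1"
      using cbip_through_b_in_B1[OF cbip_star[OF adj_sym[OF q(1)] \<open>E q p\<close> bp]] \<open>p \<notin> B\<close>
      by blast
    then show False
      using cbip_adj_iff[OF cbip_B1 _ escape_in_B1[OF q'] \<open>p \<in> B1\<close> q'(1)] b_u_in_B1 bp q'p
      by blast
  qed
  show ?thesis
    using eq_if_same_adj[of q u] transfer[OF assms adj_b_u u_outside(2)]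
      transfer[OF adj_b_u u_outside(2) assms] adj_memV2 assms(1) u_outside(1) by blast
qed

lemma y0_notin_B2: "y0 \<notin> B2"
  using cbip_adj_iff[OF cbip_B2, of y1 u y0] y1_u_in_B2 adj_u_y1 adj_sym Y_nonadj y1_in_Y y0_in_Y
    y0_nonadj_escape[OF adj_b_u u_outside(2)] by blast

lemma y0_nbr:
  assumes "E y0 w" "w \<noteq> b"
  shows "w \<in> B1" "E u w" "\<not> E b w" "\<not> E y1 w" "w \<notin> B" "w \<in> V"
proof -
  show "w \<in> B1" "E u w" "\<not> E b w"
    using Y_other_nbr[OF y0_in_Y y0_neq_y1 assms] by blast+
  show "w \<notin> B"
    using assms B_iff Y_nonadj y0_in_Y by blast
  show "\<not> E y1 w"
    using Y_escape_nbr_adj_iff[OF y1_in_Y adj_b_u u_outside(2) adj_sym[OF adj_u_y1]]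
      \<open>\<not> E b w\<close> assms(2) by blast
  show "w \<in> V"
    using assms(1) adj_memV2 by blast
qed

lemma y0_nbr_unique:
  assumes "E y0 w" "w \<noteq> b" "E y0 w'" "w' \<noteq> b"
  shows "w = w'"
proof -
  have transfer: "E w' p" if w: "E y0 w" "w \<noteq> b" and w': "E y0 w'" "w' \<noteq> b" and "E w p"
    for w w' p
  proof (rule ccontr)
    assume w'p: "\<not> E w' p"
    have "p \<noteq> y0" "p \<noteq> u"
      using w'p w'(1) y0_nbr(2)[OF w'] adj_sym by blast+
    moreover have "p \<noteq> b" "p \<noteq> y1"
      using y0_nbr(3,4)[OF w] \<open>E w p\<close> adj_sym by blast+
    ultimately have "p \<notin> B"
      using B_iff Y_eq by blast
    have y0p: "\<not> E y0 p"
    proof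
      assume "E y0 p"
      then have "p \<in> B1"
        using y0_nbr(1) \<open>p \<noteq> b\<close> by blast
      then show False
        using cbip_adj_iff[OF cbip_B1 _ y0_nbr(1)[OF w], of y0 p] Y_other_in_B1[OF y0_in_Y y0_neq_y1]
          w(1) \<open>E y0 p\<close> \<open>E w p\<close> by blast
    qed
    have "{w, y0, p} \<subseteq> V"
      using \<open>E w p\<close> adj_memV1 adj_memV2 y0_in_Y Y_subset_V by blast
    moreover have "y0 \<in> B"
      using B_iff y0_in_Y by blast
    ultimately have "{w, y0, p} \<subseteq> B1 \<or> {w, y0, p} \<subseteq> B2"
      using cbip_leaving_B[OF cbip_star[OF adj_sym[OF w(1)] \<open>E w p\<close> y0p], of y0 p] \<open>p \<notin> B\<close>
      by blast
    then have "p \<in> B1"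
      using y0_notin_B2 by blast
    then have "E b p"
      using cbip_adj_iff[OF cbip_B1 _ _ _ Y_adj_b(2)[OF y0_in_Y]] b_u_in_B1
        Y_other_in_B1[OF y0_in_Y y0_neq_y1] y0p by blast
    then show False
      using escape_eq_u \<open>p \<notin> B\<close> \<open>p \<noteq> u\<close> by blast
  qed
  show ?thesis
    using eq_if_same_adj[of w w'] transfer[OF assms] transfer[OF assms(3,4,1,2)]
      y0_nbr(6) assms by blast
qed

lemma adj_b_cases: "E b z \<Longrightarrow> z = y0 \<or> z = y1 \<or> z = u"
  using escape_eq_u[of z] B_iff[of z] Y_eq adj_irrefl[of b] by auto

lemma adj_y1_cases: "E y1 z \<Longrightarrow> z = b \<or> z = u"
  using Y_escape_nbr_adj_iff[OF y1_in_Y adj_b_u u_outside(2) adj_sym[OF adj_u_y1]] escape_eq_u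
  by blast

lemma adj_u_cases:
  assumes "E u z"
  shows "z = b \<or> z = y1 \<or> E y0 z"
proof (rule ccontr)
  assume "\<not> ?thesis"
  then have "z \<noteq> b" "z \<noteq> y1" "\<not> E y0 z"
    by blast+
  moreover have "z \<noteq> y0"
    using y0_nonadj_escape[OF adj_b_u u_outside(2)] assms adj_sym by blast
  ultimately have "z \<notin> B"
    using B_iff Y_eq by blast
  have "\<not> E b z"
    using escape_eq_u \<open>z \<notin> B\<close> assms adj_irrefl by blast
  moreover have "{u, b, z} \<subseteq> V"
    using assms adj_memV2 u_outside(1) b_in_V by blast
  ultimately have "z \<in> B1"
    using cbip_through_b_in_B1[OF cbip_star[OF adj_sym[OF adj_b_u] assms]] \<open>z \<notin> B\<close> by blast
  then show False
    using cbip_adj_iff[OF cbip_B1 _ Y_other_in_B1[OF y0_in_Y y0_neq_y1] _ Y_adj_b(1)[OF y0_in_Y]]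
      b_u_in_B1 \<open>\<not> E b z\<close> \<open>\<not> E y0 z\<close> by blast
qed

lemma y0_nbr_adj_cases:
  assumes w: "E y0 w" "w \<noteq> b" and "E w z"
  shows "z = u \<or> z = y0"
proof (rule ccontr)
  assume "\<not> ?thesis"
  then have "z \<noteq> u" "z \<noteq> y0"
    by blast+
  moreover have "z \<noteq> b" "z \<noteq> y1"
    using y0_nbr(3,4)[OF w] assms(3) adj_sym by blast+
  ultimately have "z \<notin> B"
    using B_iff Y_eq by blast
  have y0z: "\<not> E y0 z"
    using y0_nbr_unique[OF w, of z] \<open>z \<noteq> b\<close> assms(3) adj_irrefl by blast
  have "{w, y0, z} \<subseteq> V"
    using assms(3) adj_memV1 adj_memV2 y0_in_Y Y_subset_V by blast
  moreover have "y0 \<in> B"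
    using B_iff y0_in_Y by blast
  ultimately have "{w, y0, z} \<subseteq> B1 \<or> {w, y0, z} \<subseteq> B2"
    using cbip_leaving_B[OF cbip_star[OF adj_sym[OF w(1)] assms(3) y0z], of y0 z] \<open>z \<notin> B\<close>
    by blast
  then have "z \<in> B1"
    using y0_notin_B2 by blast
  then have "E b z"
    using cbip_adj_iff[OF cbip_B1 _ _ _ Y_adj_b(2)[OF y0_in_Y]] b_u_in_B1
      Y_other_in_B1[OF y0_in_Y y0_neq_y1] y0z by blast
  then show False
    using escape_eq_u \<open>z \<notin> B\<close> \<open>z \<noteq> u\<close> by blast
qed

lemma contradiction: False
proof -
  define W where "W = {w. E y0 w \<and> w \<noteq> b}"
  have "finite W"
    using finite_V adj_memV2 unfolding W_def by (auto intro: finite_subset)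
  moreover have "card W \<le> 1"
    using calculation y0_nbr_unique unfolding W_def by (simp add: card_le_Suc0_iff_eq)
  moreover have "card {b, y0, y1, u} \<le> 4"
    by (simp add: card_insert_if)
  ultimately have "card ({b, y0, y1, u} \<union> W) \<le> 5"
    using card_Un_le[of "{b, y0, y1, u}" W] by linarith
  moreover have "card V \<le> card ({b, y0, y1, u} \<union> W)"
  proof (rule card_V_le_if_adj_closed)
    fix k z
    assume "k \<in> {b, y0, y1, u} \<union> W" "E k z"
    then show "z \<in> {b, y0, y1, u} \<union> W"
      using adj_b_cases adj_y1_cases adj_u_cases y0_nbr_adj_cases unfolding W_def by blast
  qed (use b_in_V \<open>finite W\<close> in auto)
  ultimately show False
    using card_V by linarith
qed

end

context degree_two_biclique
begin

lemma centre_has_no_escape: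
  assumes X: "X = {b}" and ys: "ya \<in> Y" "yb \<in> Y" "ya \<noteq> yb"
    and u: "u \<notin> B" "E b u"
  shows False
proof -
  have uV: "u \<in> V"
    using u(2) adj_memV2 by blast
  obtain y1 where y1: "y1 \<in> Y" "E u y1"
    using outside_adj_X_imp_adj_Y[OF uV u(1)] X u(2) adj_sym by blast
  obtain y0 where y0: "y0 \<in> Y" "y0 \<noteq> y1"
    using ys by blast
  have by1: "E b y1"
    using X_Y_adj X y1(1) by blast
  obtain C where C: "biclique V E C" "{b, u} \<subseteq> C"
    using exists_biclique_superset[OF cbip_edge[OF u(2)]] adj_memV1 adj_memV2 u(2) by blast
  obtain D where D: "biclique V E D" "{y1, u} \<subseteq> D"
    using exists_biclique_superset[OF cbip_edge[OF adj_sym[OF y1(2)]]] uV Y_subset_V y1(1)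
    by blast
  have "b \<notin> D"
    using cbip_adj_iff[OF biclique_cbip[OF D(1)] _ _ _ adj_sym[OF y1(2)], of b] D(2) by1 u(2)
      adj_sym by blast
  have "degree_two_biclique V E B X Y C D"
  proof (rule reindex_others)
    show "C \<inter> B \<noteq> {}" "D \<inter> B \<noteq> {}" "C \<noteq> B" "D \<noteq> B" "C \<noteq> D"
      using C(2) D(2) u(1) \<open>b \<notin> D\<close> B_sides X y1(1) by blast+
  qed (fact C(1) D(1))+
  then have "centre_escape_setting V E B X Y C D b u y0 y1"
    using X uV u y1 y0 C(2) D(2)
    by (simp add: centre_escape_setting_def centre_escape_setting_axioms_def)
  then show False
    by (rule centre_escape_setting.contradiction)
qed

lemma pendant_path_if_singleton_side:
  assumes X: "X = {b}" and ys: "ya \<in> Y" "yb \<in> Y" "ya \<noteq> yb"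
  shows "pendant_path_biclique B"
proof (cases "\<forall>z. E b z \<longrightarrow> z \<in> Y")
  case True
  then have "star_setting V E B X Y B1 B2 b"
    using X by (intro star_setting.intro degree_two_biclique_axioms) (simp add: star_setting_axioms_def)
  then show ?thesis
    using star_setting.pendant_path[OF _ ys] by blast
next
  case False
  then obtain u where "E b u" "u \<notin> Y"
    by blast
  then have "u \<notin> B"
    using B_sides X adj_irrefl by blast
  then have False
    using centre_has_no_escape[OF X ys] \<open>E b u\<close> by blast
  then show ?thesis ..
qed

end

locale mixed_outside_setting = degree_two_biclique +
  fixes x y u x0 y0
  assumes x_in_X: "x \<in> X" and y_in_Y: "y \<in> Y"
    and u_outside: "u \<in> V" "u \<notin> B" and adj_u_x: "E u x" and adj_u_y: "E u y"
    and x0_in_X: "x0 \<in> X" and x0_neq_x: "x0 \<noteq> x"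
    and y0_in_Y: "y0 \<in> Y" and y0_neq_y: "y0 \<noteq> y"
    and x_u_in_B1: "{x, u} \<subseteq> B1" and y_u_in_B2: "{y, u} \<subseteq> B2"
begin

lemma swap: "mixed_outside_setting V E B Y X B2 B1 y x u y0 x0"
proof -
  have "degree_two_biclique V E B Y X B2 B1"
    using degree_two_biclique.reindex_others[OF swap_sides] biclique_B1 biclique_B2 B1_meets_B
      B2_meets_B B1_neq_B B2_neq_B B1_neq_B2 by simp
  then show ?thesis
    using x_in_X y_in_Y u_outside adj_u_x adj_u_y x0_in_X x0_neq_x y0_in_Y y0_neq_y x_u_in_B1
      y_u_in_B2
    by (simp add: mixed_outside_setting_def mixed_outside_setting_axioms_def)
qed

lemma y_notin_B1: "y \<notin> B1"
  using cbip_adj_iff[OF cbip_B1, of x u y] x_u_in_B1 adj_u_x adj_u_y adj_sym X_Y_adj x_in_X y_in_Y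
  by blast

lemma X_adj_u_in_B1:
  assumes "x' \<in> X" "E x' u"
  shows "x' \<in> B1" "x' \<notin> B2"
proof -
  show "x' \<notin> B2"
    using cbip_adj_iff[OF cbip_B2, of y u x'] y_u_in_B2 adj_u_y assms Y_X_adj y_in_Y adj_sym
    by blast
  have "{x', u} \<subseteq> V"
    using assms(1) X_subset_V u_outside(1) by blast
  then have "{x', u} \<subseteq> B1 \<or> {x', u} \<subseteq> B2"
    using cbip_leaving_B[OF cbip_edge[OF assms(2)], of x' u] assms(1) B_sides u_outside(2)
    by blast
  then show "x' \<in> B1"
    using \<open>x' \<notin> B2\<close> by blast
qed

lemma X_nonadj_u_in_B2:
  assumes "x' \<in> X" "\<not> E x' u"
  shows "x' \<in> B2" "x' \<notin> B1"
proof -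
  show "x' \<notin> B1"
    using cbip_adj_iff[OF cbip_B1, of x u x'] x_u_in_B1 adj_u_x adj_sym X_nonadj x_in_X assms
    by blast
  have "\<not> E u x'"
    using assms(2) adj_sym by blast
  moreover have "{y, u, x'} \<subseteq> V"
    using assms(1) X_subset_V Y_subset_V y_in_Y u_outside(1) by blast
  ultimately have "{y, u, x'} \<subseteq> B1 \<or> {y, u, x'} \<subseteq> B2"
    using cbip_leaving_B[OF cbip_star[OF adj_sym[OF adj_u_y] Y_X_adj[OF assms(1) y_in_Y]],
        of y u] y_in_Y B_sides u_outside(2) by blast
  then show "x' \<in> B2"
    using y_notin_B1 by blast
qed

lemma x0_nonadj_u: "\<not> E x0 u"
  using X_adj_u_in_B1[OF x0_in_X] X_adj_u_in_B1[OF x_in_X adj_sym[OF adj_u_x]]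
    X_eq_if_same_others[OF x0_in_X x_in_X] x0_neq_x by blast

lemma x0_in_B2: "x0 \<in> B2" and x0_notin_B1: "x0 \<notin> B1"
  using X_nonadj_u_in_B2[OF x0_in_X x0_nonadj_u] by blast+

lemma X_eq: "X = {x, x0}"
proof -
  have "x' = x \<or> x' = x0" if "x' \<in> X" for x'
  proof (cases "E x' u")
    case True
    then show ?thesis
      using X_adj_u_in_B1[OF that] X_adj_u_in_B1[OF x_in_X adj_sym[OF adj_u_x]]
        X_eq_if_same_others[OF that x_in_X] by blast
  next
    case False
    then show ?thesis
      using X_nonadj_u_in_B2[OF that] x0_in_B2 x0_notin_B1 X_eq_if_same_others[OF that x0_in_X]
      by blast
  qed
  then show ?thesis
    using x_in_X x0_in_X by blast
qed

lemma x_notin_B2: "x \<notin> B2"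
  and y0_nonadj_u: "\<not> E y0 u" and y0_in_B1: "y0 \<in> B1" and y0_notin_B2: "y0 \<notin> B2"
  and Y_eq: "Y = {y, y0}"
  using mixed_outside_setting.y_notin_B1[OF swap] mixed_outside_setting.x0_nonadj_u[OF swap]
    mixed_outside_setting.x0_in_B2[OF swap] mixed_outside_setting.x0_notin_B1[OF swap]
    mixed_outside_setting.X_eq[OF swap] by blast+

lemma x_outside_nbr:
  assumes w: "w \<notin> B" "E x w"
  shows "E y w" "\<not> E x0 w" "\<not> E y0 w" "\<not> E u w" "w \<in> B1" "w \<in> B2"
proof -
  have wV: "w \<in> V"
    using w(2) adj_memV2 by blast
  have xB: "x \<in> B" and yB: "y \<in> B"
    using x_in_X y_in_Y B_sides by blast+
  have xy: "E x y"
    using X_Y_adj x_in_X y_in_Y by blast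
  have "{x, w} \<subseteq> B1 \<or> {x, w} \<subseteq> B2"
    using cbip_leaving_B[OF cbip_edge[OF w(2)], of x w] xB w(1) wV X_subset_V x_in_X by blast
  then show wB1: "w \<in> B1"
    using x_notin_B2 by blast
  show "\<not> E u w"
    using cbip_adj_iff[OF cbip_B1 _ wB1, of x u] x_u_in_B1 w(2) adj_u_x adj_sym by blast
  show "\<not> E y0 w"
    using cbip_adj_iff[OF cbip_B1 _ wB1 y0_in_B1, of x] x_u_in_B1 w(2) X_Y_adj x_in_X y0_in_Y
      adj_sym by blast
  show yw: "E y w"
  proof (rule ccontr)
    assume "\<not> E y w"
    moreover have "{x, y, w} \<subseteq> V"
      using wV X_subset_V Y_subset_V x_in_X y_in_Y by blast
    ultimately have "{x, y, w} \<subseteq> B1 \<or> {x, y, w} \<subseteq> B2"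
      using cbip_leaving_B[OF cbip_star[OF xy w(2)], of x w] xB w(1) by blast
    then show False
      using x_notin_B2 y_notin_B1 by blast
  qed
  have "{y, w} \<subseteq> B1 \<or> {y, w} \<subseteq> B2"
    using cbip_leaving_B[OF cbip_edge[OF yw], of y w] yB w(1) wV Y_subset_V y_in_Y by blast
  then show wB2: "w \<in> B2"
    using y_notin_B1 by blast
  show "\<not> E x0 w"
    using cbip_adj_iff[OF cbip_B2 _ wB2 x0_in_B2, of y] y_u_in_B2 yw Y_X_adj x0_in_X y_in_Y
      adj_sym by blast
qed

lemma x0_outside_nbr:
  assumes w: "w \<notin> B" "E x0 w"
  shows "E y0 w" "\<not> E x w" "\<not> E y w" "E u w" "w \<in> B1" "w \<in> B2"
proof -
  have wV: "w \<in> V"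
    using w(2) adj_memV2 by blast
  have x0B: "x0 \<in> B" and y0B: "y0 \<in> B"
    using x0_in_X y0_in_Y B_sides by blast+
  have x0y0: "E x0 y0"
    using X_Y_adj x0_in_X y0_in_Y by blast
  have "{x0, w} \<subseteq> B1 \<or> {x0, w} \<subseteq> B2"
    using cbip_leaving_B[OF cbip_edge[OF w(2)], of x0 w] x0B w(1) wV X_subset_V x0_in_X by blast
  then show wB2: "w \<in> B2"
    using x0_notin_B1 by blast
  show "E u w"
    using cbip_adj_iff[OF cbip_B2 x0_in_B2 wB2, of u] y_u_in_B2 w(2) x0_nonadj_u adj_sym by blast
  show "\<not> E y w"
    using cbip_adj_iff[OF cbip_B2 x0_in_B2 wB2, of y] y_u_in_B2 w(2) X_Y_adj x0_in_X y_in_Y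
      adj_sym by blast
  show y0w: "E y0 w"
  proof (rule ccontr)
    assume "\<not> E y0 w"
    moreover have "{x0, y0, w} \<subseteq> V"
      using wV X_subset_V Y_subset_V x0_in_X y0_in_Y by blast
    ultimately have "{x0, y0, w} \<subseteq> B1 \<or> {x0, y0, w} \<subseteq> B2"
      using cbip_leaving_B[OF cbip_star[OF x0y0 w(2)], of x0 w] x0B w(1) by blast
    then show False
      using x0_notin_B1 y0_notin_B2 by blast
  qed
  have "{y0, w} \<subseteq> B1 \<or> {y0, w} \<subseteq> B2"
    using cbip_leaving_B[OF cbip_edge[OF y0w], of y0 w] y0B w(1) wV Y_subset_V y0_in_Y by blast
  then show wB1: "w \<in> B1"
    using y0_notin_B2 by blast
  show "\<not> E x w"
    using cbip_adj_iff[OF cbip_B1 y0_in_B1 wB1, of x] x_u_in_B1 y0w Y_X_adj x_in_X y0_in_Y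
      adj_sym by blast
qed

lemma outside_adj_x_or_x0:
  assumes "w \<in> V" "w \<notin> B"
  shows "E x w \<or> E x0 w"
proof -
  have "\<exists>z\<in>B. E z c" if "c \<in> B1 \<union> B2" "c \<notin> B" for c
  proof -
    have "E x c \<or> E y0 c" if "c \<in> B1"
      using cbip_adj_iff[OF cbip_B1 _ y0_in_B1 that, of x] x_u_in_B1 X_Y_adj x_in_X y0_in_Y
      by blast
    moreover have "E x0 c \<or> E y c" if "c \<in> B2"
      using cbip_adj_iff[OF cbip_B2 x0_in_B2 _ that, of y] y_u_in_B2 X_Y_adj x0_in_X y_in_Y
      by blast
    ultimately show ?thesis
      using that(1) X_eq Y_eq B_sides by blast
  qed
  then obtain z where "z \<in> B" "E z w"
    using outside_adj_B assms by blast
  then consider "E x w" | "E y w" | "E x0 w" | "E y0 w"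
    using X_eq Y_eq B_sides by blast
  then show ?thesis
    using mixed_outside_setting.x_outside_nbr(1)[OF swap _ ]
      mixed_outside_setting.x0_outside_nbr(1)[OF swap] assms(2) by cases blast+
qed

lemma outside_adj_x_eq_u:
  assumes w: "w \<in> V" "w \<notin> B" "E x w"
  shows "w = u"
proof (rule eq_if_same_adj)
  show "w \<in> V" "u \<in> V"
    using w(1) u_outside(1) by blast+
  have via_x: "E t z \<longleftrightarrow> \<not> E x z" if "t \<in> B1" "E x t" "z \<in> V" "z \<notin> B" for t z
  proof -
    have "z \<in> B1"
      using outside_adj_x_or_x0[OF that(3,4)] x_outside_nbr(5) x0_outside_nbr(5) that(4) by blast
    then show ?thesis
      using cbip_adj_iff[OF cbip_B1 _ that(1) _ that(2)] x_u_in_B1 by blast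
  qed
  fix z
  consider "z \<notin> V" | "z \<in> V" "z \<notin> B" | "z = x" | "z = x0" | "z = y" | "z = y0"
    using X_eq Y_eq B_sides by blast
  then show "E w z \<longleftrightarrow> E u z"
  proof cases
    case 1
    then show ?thesis
      using adj_memV2 by blast
  next
    case 2
    then show ?thesis
      using via_x[OF x_outside_nbr(5)[OF w(2,3)] w(3)] via_x[of u] x_u_in_B1 adj_u_x adj_sym
      by blast
  next
    case 3
    then show ?thesis
      using w(3) adj_u_x adj_sym by blast
  next
    case 4
    then show ?thesis
      using x_outside_nbr(2)[OF w(2,3)] x0_nonadj_u adj_sym by blast
  next
    case 5
    then show ?thesis
      using x_outside_nbr(1)[OF w(2,3)] adj_u_y adj_sym by blast
  next
    case 6
    then show ?thesis
      using x_outside_nbr(3)[OF w(2,3)] y0_nonadj_u adj_sym by blast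
  qed
qed

lemma outside_adj_x0_unique:
  assumes w: "w \<notin> B" "E x0 w" and w': "w' \<notin> B" "E x0 w'"
  shows "w = w'"
proof (rule eq_if_same_adj)
  show "w \<in> V" "w' \<in> V"
    using w(2) w'(2) adj_memV2 by blast+
  have via_y0: "E t z \<longleftrightarrow> \<not> E y0 z" if "t \<notin> B" "E x0 t" "z \<in> V" "z \<notin> B" for t z
  proof -
    have "z \<in> B1"
      using outside_adj_x_or_x0[OF that(3,4)] x_outside_nbr(5) x0_outside_nbr(5) that(4) by blast
    then show ?thesis
      using cbip_adj_iff[OF cbip_B1 y0_in_B1 x0_outside_nbr(5)[OF that(1,2)] _
          x0_outside_nbr(1)[OF that(1,2)]] by blast
  qed
  fix z
  consider "z \<notin> V" | "z \<in> V" "z \<notin> B" | "z = x" | "z = x0" | "z = y" | "z = y0"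
    using X_eq Y_eq B_sides by blast
  then show "E w z \<longleftrightarrow> E w' z"
  proof cases
    case 1
    then show ?thesis
      using adj_memV2 by blast
  next
    case 2
    then show ?thesis
      using via_y0[OF w] via_y0[OF w'] by blast
  next
    case 3
    then show ?thesis
      using x0_outside_nbr(2)[OF w] x0_outside_nbr(2)[OF w'] adj_sym by blast
  next
    case 4
    then show ?thesis
      using w(2) w'(2) adj_sym by blast
  next
    case 5
    then show ?thesis
      using x0_outside_nbr(3)[OF w] x0_outside_nbr(3)[OF w'] adj_sym by blast
  next
    case 6
    then show ?thesis
      using x0_outside_nbr(1)[OF w] x0_outside_nbr(1)[OF w'] adj_sym by blast
  qed
qed

lemma contradiction: False
proof -
  define S where "S = {w. w \<notin> B \<and> E x0 w}"
  have "finite S"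
    using finite_V adj_memV2 unfolding S_def by (auto intro: finite_subset)
  moreover have "card S \<le> 1"
    using calculation outside_adj_x0_unique unfolding S_def by (simp add: card_le_Suc0_iff_eq)
  moreover have "card {x, x0, y, y0, u} \<le> 5"
    by (simp add: card_insert_if)
  moreover have "V \<subseteq> {x, x0, y, y0, u} \<union> S"
    using outside_adj_x_or_x0 outside_adj_x_eq_u X_eq Y_eq B_sides unfolding S_def by blast
  then have "card V \<le> card ({x, x0, y, y0, u} \<union> S)"
    using \<open>finite S\<close> by (intro card_mono) auto
  ultimately show False
    using card_Un_le[of "{x, x0, y, y0, u}" S] card_V by linarith
qed

end

context degree_two_biclique
begin

lemma no_mixed_outside_vertex:
  assumes xs: "x \<in> X" "x0 \<in> X" "x0 \<noteq> x" and ys: "y \<in> Y" "y0 \<in> Y" "y0 \<noteq> y"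
    and u: "u \<notin> B" "E u x" "E u y"
  shows False
proof -
  have uV: "u \<in> V"
    using u(2) adj_memV1 by blast
  have xy: "E x y"
    using X_Y_adj xs(1) ys(1) by blast
  obtain Cx where Cx: "biclique V E Cx" "{x, u} \<subseteq> Cx"
    using exists_biclique_superset[OF cbip_edge[OF adj_sym[OF u(2)]]] uV X_subset_V xs(1)
    by blast
  obtain Cy where Cy: "biclique V E Cy" "{y, u} \<subseteq> Cy"
    using exists_biclique_superset[OF cbip_edge[OF adj_sym[OF u(3)]]] uV Y_subset_V ys(1)
    by blast
  have "y \<notin> Cx"
    using cbip_adj_iff[OF biclique_cbip[OF Cx(1)] _ _ _ adj_sym[OF u(2)], of y] Cx(2) xy u(3)
    by blast
  have "degree_two_biclique V E B X Y Cx Cy"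
  proof (rule reindex_others)
    show "Cx \<inter> B \<noteq> {}" "Cy \<inter> B \<noteq> {}" "Cx \<noteq> B" "Cy \<noteq> B" "Cx \<noteq> Cy"
      using Cx(2) Cy(2) u(1) \<open>y \<notin> Cx\<close> B_sides xs(1) ys(1) by blast+
  qed (fact Cx(1) Cy(1))+
  then have "mixed_outside_setting V E B X Y Cx Cy x y u x0 y0"
    using xs ys uV u Cx(2) Cy(2)
    by (simp add: mixed_outside_setting_def mixed_outside_setting_axioms_def)
  then show False
    by (rule mixed_outside_setting.contradiction)
qed

end

locale separated_outside_setting = degree_two_biclique +
  fixes x y x0 y0
  assumes no_mixed: "\<And>w x' y'. w \<notin> B \<Longrightarrow> x' \<in> X \<Longrightarrow> y' \<in> Y \<Longrightarrow> E w x' \<Longrightarrow> \<not> E w y'"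
    and x_in_X: "x \<in> X" and y_in_Y: "y \<in> Y"
    and x0_in_X: "x0 \<in> X" and x0_neq_x: "x0 \<noteq> x"
    and y0_in_Y: "y0 \<in> Y" and y0_neq_y: "y0 \<noteq> y"
    and x_Y_in_B1: "insert x Y \<subseteq> B1" and y_X_in_B2: "insert y X \<subseteq> B2"
begin

lemma swap: "separated_outside_setting V E B Y X B2 B1 y x y0 x0"
proof -
  have "degree_two_biclique V E B Y X B2 B1"
    using degree_two_biclique.reindex_others[OF swap_sides] biclique_B1 biclique_B2 B1_meets_B
      B2_meets_B B1_neq_B B2_neq_B B1_neq_B2 by simp
  moreover have "\<not> E w y'" if "w \<notin> B" "y' \<in> X" "x' \<in> Y" "E w x'" for w x' y'
    using no_mixed[OF that(1,2,3)] that(4) by blast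
  ultimately show ?thesis
    using x_in_X y_in_Y x0_in_X x0_neq_x y0_in_Y y0_neq_y x_Y_in_B1 y_X_in_B2
    by (simp add: separated_outside_setting_def separated_outside_setting_axioms_def)
qed

lemma X_outside_edge_in_B1:
  assumes w: "w \<notin> B" and x': "x' \<in> X" "E x' w"
  shows "x' \<in> B1" "w \<in> B1"
proof -
  have "cbip ({x'} \<union> insert w Y)"
    using cbip_insert_outside_Y[OF x' w] no_mixed[OF w x'(1)] x'(2) adj_sym by blast
  moreover have "{x'} \<union> insert w Y \<subseteq> V"
    using x' X_subset_V Y_subset_V adj_memV2 by blast
  moreover have "x' \<in> B"
    using x'(1) B_sides by blast
  ultimately have "{x'} \<union> insert w Y \<subseteq> B1 \<or> {x'} \<union> insert w Y \<subseteq> B2"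
    using cbip_leaving_B[of "{x'} \<union> insert w Y" x' w] w by blast
  moreover have "\<not> Y \<subseteq> B2"
    using B_not_subset_B2 y_X_in_B2 B_sides by blast
  ultimately show "x' \<in> B1" "w \<in> B1"
    by blast+
qed

lemma X_outside_nbr_eq_x:
  assumes "w \<notin> B" "x' \<in> X" "E x' w"
  shows "x' = x"
  using X_eq_if_same_others[OF assms(2) x_in_X] X_outside_edge_in_B1[OF assms] x_Y_in_B1
    y_X_in_B2 assms(2) x_in_X by blast

lemma X_eq: "X = {x, x0}"
proof -
  have "x0 \<notin> B1"
    using X_eq_if_same_others[OF x0_in_X x_in_X] x0_neq_x x_Y_in_B1 y_X_in_B2 x0_in_X x_in_X
    by blast
  then have "x' = x \<or> x' = x0" if "x' \<in> X" for x'
    using X_eq_if_same_others[OF that x_in_X] X_eq_if_same_others[OF that x0_in_X]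
      x_Y_in_B1 y_X_in_B2 that x_in_X x0_in_X by blast
  then show ?thesis
    using x_in_X x0_in_X by blast
qed

lemma Y_outside_nbr_eq_y: "w \<notin> B \<Longrightarrow> y' \<in> Y \<Longrightarrow> E y' w \<Longrightarrow> y' = y"
  and Y_eq: "Y = {y, y0}"
  using separated_outside_setting.X_outside_nbr_eq_x[OF swap]
    separated_outside_setting.X_eq[OF swap] by blast+

lemma outside_adj_x_or_y:
  assumes "w \<in> V" "w \<notin> B"
  shows "E x w \<or> E y w"
proof -
  have xy: "E x y"
    using X_Y_adj x_in_X y_in_Y by blast
  have "\<exists>z\<in>B. E z c" if "c \<in> B1 \<union> B2" for c
    using cbip_adj_iff[OF cbip_B1 _ _ _ xy, of c] cbip_adj_iff[OF cbip_B2 _ _ _ xy, of c]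
      x_Y_in_B1 y_X_in_B2 x_in_X y_in_Y that B_sides by blast
  then obtain z where "z \<in> B" "E z w"
    using outside_adj_B assms by blast
  then show ?thesis
    using X_outside_nbr_eq_x Y_outside_nbr_eq_y assms(2) B_sides by blast
qed

lemma outside_x_nbr_adj_iff:
  assumes w: "w \<notin> B" "E x w" and "z \<in> B"
  shows "E w z \<longleftrightarrow> z = x"
  using X_outside_nbr_eq_x[OF w(1)] no_mixed[OF w(1) x_in_X] w(2) assms(3) B_sides adj_sym by blast

lemma outside_x_nbrs_nonadj:
  assumes "w \<notin> B" "E x w" "w' \<notin> B" "E x w'"
  shows "\<not> E w w'"
  using cbip_adj_iff[OF cbip_B1 _ X_outside_edge_in_B1(2)[OF assms(1) x_in_X assms(2)]
      X_outside_edge_in_B1(2)[OF assms(3) x_in_X assms(4)] assms(2)] x_Y_in_B1 assms(4)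
  by blast

lemma outside_x_y_nbrs_nonadj:
  assumes w: "w \<notin> B" "E x w" and z: "z \<notin> B" "E y z"
  shows "\<not> E w z"
proof
  assume wz: "E w z"
  have "\<not> E x z"
    using separated_outside_setting.outside_x_nbr_adj_iff[OF swap z, of x] x_in_X y_in_Y B_sides
      sides_disjoint adj_sym by blast
  moreover have "{w, x, z} \<subseteq> V"
    using wz adj_memV1 adj_memV2 x_in_X X_subset_V by blast
  moreover have "x \<in> B"
    using x_in_X B_sides by blast
  ultimately have "{w, x, z} \<subseteq> B1 \<or> {w, x, z} \<subseteq> B2"
    using cbip_leaving_B[OF cbip_star[OF adj_sym[OF w(2)] wz], of x z] z(1) by blast
  then show False
  proof
    assume "{w, x, z} \<subseteq> B1"
    moreover have "\<not> E y0 z"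
      using Y_outside_nbr_eq_y[OF z(1) y0_in_Y] y0_neq_y by blast
    ultimately show False
      using cbip_adj_iff[OF cbip_B1 _ _ _ X_Y_adj[OF x_in_X y0_in_Y], of z] x_Y_in_B1 y0_in_Y
        \<open>\<not> E x z\<close> by blast
  next
    assume "{w, x, z} \<subseteq> B2"
    moreover have "\<not> E x0 w" "\<not> E y w"
      using outside_x_nbr_adj_iff[OF w, of x0] outside_x_nbr_adj_iff[OF w, of y] x0_neq_x
        x0_in_X y_in_Y B_sides sides_disjoint x_in_X adj_sym by blast+
    ultimately show False
      using cbip_adj_iff[OF cbip_B2 _ _ _ Y_X_adj[OF x0_in_X y_in_Y], of w] y_X_in_B2 x0_in_X
      by blast
  qed
qed

lemma outside_x_nbr_unique:
  assumes w: "w \<notin> B" "E x w" and w': "w' \<notin> B" "E x w'"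
  shows "w = w'"
proof (rule eq_if_same_adj)
  show "w \<in> V" "w' \<in> V"
    using w(2) w'(2) adj_memV2 by blast+
  fix z
  consider "z \<notin> V" | "z \<in> B" | "z \<in> V" "z \<notin> B" "E x z" | "z \<notin> B" "E y z"
    using outside_adj_x_or_y by blast
  then show "E w z \<longleftrightarrow> E w' z"
  proof cases
    case 1
    then show ?thesis
      using adj_memV2 by blast
  next
    case 2
    then show ?thesis
      using outside_x_nbr_adj_iff[OF w] outside_x_nbr_adj_iff[OF w'] by blast
  next
    case 3
    then show ?thesis
      using outside_x_nbrs_nonadj[OF w] outside_x_nbrs_nonadj[OF w'] by blast
  next
    case 4
    then show ?thesis
      using outside_x_y_nbrs_nonadj[OF w] outside_x_y_nbrs_nonadj[OF w'] by blast
  qed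
qed

lemma outside_y_nbr_unique: "w \<notin> B \<Longrightarrow> E y w \<Longrightarrow> w' \<notin> B \<Longrightarrow> E y w' \<Longrightarrow> w = w'"
  using separated_outside_setting.outside_x_nbr_unique[OF swap] .

lemma contradiction: False
proof -
  define Ux Uy where "Ux = {w. w \<notin> B \<and> E x w}" and "Uy = {w. w \<notin> B \<and> E y w}"
  have "finite Ux" "finite Uy"
    using finite_V adj_memV2 unfolding Ux_def Uy_def by (auto intro: finite_subset)
  moreover have "card Ux \<le> 1" "card Uy \<le> 1"
    using calculation outside_x_nbr_unique outside_y_nbr_unique unfolding Ux_def Uy_def
    by (simp_all add: card_le_Suc0_iff_eq)
  moreover have "card {x, x0, y, y0} \<le> 4"
    by (simp add: card_insert_if)
  moreover have "V \<subseteq> {x, x0, y, y0} \<union> (Ux \<union> Uy)"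
    using outside_adj_x_or_y X_eq Y_eq B_sides unfolding Ux_def Uy_def by blast
  then have "card V \<le> card ({x, x0, y, y0} \<union> (Ux \<union> Uy))"
    using \<open>finite Ux\<close> \<open>finite Uy\<close> by (intro card_mono) auto
  ultimately show False
    using card_Un_le[of "{x, x0, y, y0}" "Ux \<union> Uy"] card_Un_le[of Ux Uy] card_V by linarith
qed

end

context degree_two_biclique
begin

lemma no_separated_outside:
  assumes xs: "x1 \<in> X" "x2 \<in> X" "x1 \<noteq> x2" and ys: "y1 \<in> Y" "y2 \<in> Y" "y1 \<noteq> y2"
    and no_mixed: "\<And>w x' y'. w \<notin> B \<Longrightarrow> x' \<in> X \<Longrightarrow> y' \<in> Y \<Longrightarrow> E w x' \<Longrightarrow> \<not> E w y'"
  shows False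
proof -
  obtain x u where xu: "x \<in> X" "u \<notin> B" "E x u"
    using X_has_escape[OF xs] by blast
  obtain y v where yv: "y \<in> Y" "v \<notin> B" "E y v"
    using degree_two_biclique.X_has_escape[OF swap_sides ys] by blast
  obtain x0 where x0: "x0 \<in> X" "x0 \<noteq> x"
    using xs by blast
  obtain y0 where y0: "y0 \<in> Y" "y0 \<noteq> y"
    using ys by blast
  have "cbip ({x} \<union> insert u Y)"
    using cbip_insert_outside_Y[OF xu(1,3,2)] no_mixed[OF xu(2,1)] xu(3) adj_sym by blast
  moreover have "{x} \<union> insert u Y \<subseteq> V"
    using xu X_subset_V Y_subset_V adj_memV2 by blast
  ultimately obtain Cu where Cu: "biclique V E Cu" "{x} \<union> insert u Y \<subseteq> Cu"
    using exists_biclique_superset by blast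
  have "cbip ({y} \<union> insert v X)"
    using degree_two_biclique.cbip_insert_outside_Y[OF swap_sides yv(1,3,2)] no_mixed[OF yv(2) _ yv(1)]
      yv(3) adj_sym B_sides by blast
  moreover have "{y} \<union> insert v X \<subseteq> V"
    using yv X_subset_V Y_subset_V adj_memV2 by blast
  ultimately obtain Cv where Cv: "biclique V E Cv" "{y} \<union> insert v X \<subseteq> Cv"
    using exists_biclique_superset by blast
  have "Cu \<noteq> Cv"
    using cbip_superset_B_eq[OF biclique_cbip[OF Cu(1)] _ biclique_subset_V[OF Cu(1)]] Cu(2) Cv(2)
      B_sides xu(2) by blast
  then have "degree_two_biclique V E B X Y Cu Cv"
    using Cu Cv xu yv B_sides by (intro reindex_others) blast+
  then have "separated_outside_setting V E B X Y Cu Cv x y x0 y0"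
    using no_mixed xu yv x0 y0 Cu(2) Cv(2)
    by (simp add: separated_outside_setting_def separated_outside_setting_axioms_def)
  then show False
    by (rule separated_outside_setting.contradiction)
qed

lemma sides_not_both_large:
  assumes xs: "x1 \<in> X" "x2 \<in> X" "x1 \<noteq> x2" and ys: "y1 \<in> Y" "y2 \<in> Y" "y1 \<noteq> y2"
  shows False
proof (cases "\<exists>w x y. w \<notin> B \<and> x \<in> X \<and> y \<in> Y \<and> E w x \<and> E w y")
  case True
  then obtain w x y where "w \<notin> B" "x \<in> X" "y \<in> Y" "E w x" "E w y"
    by blast
  moreover obtain x0 y0 where "x0 \<in> X" "x0 \<noteq> x" "y0 \<in> Y" "y0 \<noteq> y"
    using xs ys by metis
  ultimately show False
    using no_mixed_outside_vertex by blast
next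
  case False
  then show False
    using no_separated_outside[OF xs ys] by blast
qed

lemma triangle_or_pendant_path: "triangle_biclique B \<or> pendant_path_biclique B"
proof -
  have split: "(\<exists>a. S = {a}) \<or> (\<exists>a a'. a \<in> S \<and> a' \<in> S \<and> a \<noteq> a')" if "S \<noteq> {}" for S :: "'a set"
    using that by blast
  consider v w where "X = {v}" "Y = {w}"
    | b ya yb where "X = {b}" "ya \<in> Y" "yb \<in> Y" "ya \<noteq> yb"
    | b xa xb where "Y = {b}" "xa \<in> X" "xb \<in> X" "xa \<noteq> xb"
    | x1 x2 y1 y2 where "x1 \<in> X" "x2 \<in> X" "x1 \<noteq> x2" "y1 \<in> Y" "y2 \<in> Y" "y1 \<noteq> y2"
    using split[OF X_nonempty] split[OF Y_nonempty] by blast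
  then show ?thesis
  proof cases
    case 1
    then show ?thesis
      using triangle_if_singleton_sides by blast
  next
    case 2
    then show ?thesis
      using pendant_path_if_singleton_side by blast
  next
    case 3
    then show ?thesis
      using degree_two_biclique.pendant_path_if_singleton_side[OF swap_sides] by blast
  next
    case 4
    then have False
      by (rule sides_not_both_large)
    then show ?thesis ..
  qed
qed

end

lemma (in twin_free_ugraph) degree_two_biclique_if_KB_degree_two:
  assumes "card V \<ge> 7" "B \<in> KB_vertices V E" "KB_degree V E B = 2"
  obtains X Y B1 B2 where "degree_two_biclique V E B X Y B1 B2"
proof -
  have B: "biclique V E B"
    using assms(2) unfolding KB_vertices_def by blast
  obtain X Y where XY: "X \<noteq> {}" "Y \<noteq> {}" "X \<inter> Y = {}" "B = X \<union> Y"
    "independent_set E X" "independent_set E Y" "\<forall>x\<in>X. \<forall>y\<in>Y. E x y"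
    using biclique_cbip[OF B] unfolding induces_complete_bipartite_def by blast
  obtain B1 B2 where B12: "{B'. KB_adj V E B B'} = {B1, B2}" "B1 \<noteq> B2"
    using assms(3) unfolding KB_degree_def by (auto simp: card_2_iff)
  then have adj: "KB_adj V E B B1" "KB_adj V E B B2"
    by blast+
  have "degree_two_biclique_axioms V E B X Y B1 B2"
  proof (rule degree_two_biclique_axioms.intro)
    show "biclique V E B1" "biclique V E B2"
      using adj unfolding KB_adj_def KB_vertices_def by blast+
    show "B1 \<noteq> B" "B2 \<noteq> B" "B1 \<inter> B \<noteq> {}" "B2 \<inter> B \<noteq> {}"
      using adj unfolding KB_adj_def by blast+
    show "C = B \<or> C = B1 \<or> C = B2" if "biclique V E C" "C \<inter> B \<noteq> {}" for C
    proof (cases "C = B")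
      case False
      then have "KB_adj V E B C"
        using that B unfolding KB_adj_def KB_vertices_def by blast
      then show ?thesis
        using B12(1) by blast
    qed simp
  qed (use assms(1) B B12(2) XY in auto)
  then show ?thesis
    using that by (blast intro: degree_two_biclique.intro twin_free_ugraph_axioms)
qed

theorem lemma4:
  fixes V :: "'a set" and E :: "'a \<Rightarrow> 'a \<Rightarrow> bool" and B :: "'a set"
  assumes "simple_graph V E"
    and "connected_graph V E"
    and "false_twin_free V E"
    and "card V \<ge> 7"
    and "B \<in> KB_vertices V E"
    and "KB_degree V E B = 2"
  shows "(\<exists>v w x. B = {v, w} \<and> v \<noteq> w \<and> E v w \<and> x \<in> V \<and> x \<noteq> v \<and> x \<noteq> w \<and>
            closed_nbhd V E v = {v, w, x} \<and> closed_nbhd V E w = {v, w, x} \<and>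
            independent_set E (nbhd V E x - {v, w}))
       \<or> (\<exists>a b c. B = {a, b, c} \<and> a \<noteq> b \<and> b \<noteq> c \<and> a \<noteq> c \<and>
            E a b \<and> E b c \<and> \<not> E a c \<and>
            nbhd V E a = {b} \<and> nbhd V E b = {a, c})"
proof -
  interpret twin_free_ugraph V E
    using assms(1-3) by unfold_locales
  obtain X Y B1 B2 where "degree_two_biclique V E B X Y B1 B2"
    using degree_two_biclique_if_KB_degree_two[OF assms(4-6)] .
  then have "triangle_biclique B \<or> pendant_path_biclique B"
    by (rule degree_two_biclique.triangle_or_pendant_path)
  then show ?thesis
    unfolding triangle_biclique_def pendant_path_biclique_def .
qed

end
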